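(* Let $\epsilon,\delta>0$ be small and let $\rho$ be harmonic in $\Omega_R\setminus\overline{D_{R0}}$ such that $\partial_\nu\rho=0$ on $(0,\infty)\times\{-1-\frac{\delta}{2},\,1+\frac{\delta}{2}\}$, $\rho=0$ on $\{0\}\times(-1-\frac{\delta}{2},1+\frac{\delta}{2})$, $\rho>0$ on $\partial D_{R0}$, and $\int_{\Omega_R\setminus\overline{D_{R0}}}|\nabla\rho|^2\,dx\,dy<\infty$. Then $\rho>0$ in $\Omega_R\setminus\overline{D_{R0}}$.
   Context: $\Omega_R=(0,\infty)\times(-1-\frac{\delta}{2},1+\frac{\delta}{2})$ and $D_{R0}$ is the open unit disk centered at $(1+\frac{\epsilon}{2},0)$. *)

theory Defs
  imports "HOL-Analysis.Analysis"
begin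

text \<open>Points of the plane are pairs (x,y) :: real \<times> real; the product norm is Euclidean.\<close>

definition part_x :: "(real \<times> real \<Rightarrow> real) \<Rightarrow> real \<times> real \<Rightarrow> real" where
  "part_x f p = frechet_derivative f (at p) (1, 0)"

definition part_y :: "(real \<times> real \<Rightarrow> real) \<Rightarrow> real \<times> real \<Rightarrow> real" where
  "part_y f p = frechet_derivative f (at p) (0, 1)"

definition harmonic_on :: "(real \<times> real \<Rightarrow> real) \<Rightarrow> (real \<times> real) set \<Rightarrow> bool" where
  "harmonic_on f U \<longleftrightarrow> open U \<and>
     (\<forall>p\<in>U. f differentiable (at p) \<and> part_x f differentiable (at p) \<and> part_y f differentiable (at p)) \<and>
     continuous_on U (part_x (part_x f)) \<and> continuous_on U (part_y (part_x f)) \<and>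
     continuous_on U (part_x (part_y f)) \<and> continuous_on U (part_y (part_y f)) \<and>
     (\<forall>p\<in>U. part_x (part_x f) p + part_y (part_y f) p = 0)"

definition grad_sq :: "(real \<times> real \<Rightarrow> real) \<Rightarrow> real \<times> real \<Rightarrow> real" where
  "grad_sq f p = (part_x f p)\<^sup>2 + (part_y f p)\<^sup>2"

definition Omega_R :: "real \<Rightarrow> (real \<times> real) set" where
  "Omega_R \<delta> = {0<..} \<times> {-1 - \<delta>/2 <..< 1 + \<delta>/2}"

text \<open>centre of D_R0: (1+\<epsilon>/2, 0); D_R0 = ball centre 1\<close>
definition cR0 :: "real \<Rightarrow> real \<times> real" where
  "cR0 \<epsilon> = (1 + \<epsilon>/2, 0)"

end

theory Submission
  imports Defs
begin

(* Nonnegativity is a minimum principle for rho + G on a compact truncation K of the domain, with a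
   strictly superharmonic barrier G: at a negative minimum of rho + G, interior points are excluded
   by Laplacian(rho + G) < 0 and points on the walls y = +-T by the Neumann condition together with
   d/dy G /= 0. The truncation uses the finite energy: by Fubini and the bound
   |g v - g u| <= sqrt((b - a) * integral of g'^2), a thin strip along x = 0 contains cuts around
   the corners (0, +-T) on which rho >= -alpha, and far to the right there are vertical segments
   x = L on which rho >= -eta L. The barrier alpha + eta x + kappa (y^2 - 2 x^2 + 2 L^2) then gives
   rho >= -alpha - eta x - kappa (...), and alpha, eta, kappa -> 0.
   Strict positivity: D is connected and the zero set of rho in D is relatively closed; it is
   also open, since comparison with A (1/|q - z|^2 - 1/R^2) on annuli around a point z near a
   zero p of rho shows that rho has zeros on all small circles around z. *)

lemma has_real_derivative_part_x:
  assumes "f differentiable (at (x,y))"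
  shows "((\<lambda>t. f (t,y)) has_real_derivative part_x f (x,y)) (at x)"
proof -
  have d: "(f has_derivative frechet_derivative f (at (x,y))) (at (x,y))"
    using assms frechet_derivative_works by blast
  have "((\<lambda>t. (t,y)) has_derivative (\<lambda>h. (h,0))) (at x)"
    by (auto intro!: derivative_eq_intros)
  from diff_chain_at[OF this d] have
    "((\<lambda>t. f (t,y)) has_derivative (\<lambda>h. frechet_derivative f (at (x,y)) (h,0))) (at x)"
    by (simp add: o_def)
  moreover have "frechet_derivative f (at (x,y)) (h,0) = part_x f (x,y) * h" for h
    using linear_cmul[OF has_derivative_linear[OF d], of h "(1,0)"] by (simp add: part_x_def)
  ultimately show ?thesis by (simp add: has_field_derivative_def)
qed

lemma has_real_derivative_part_y:
  assumes "f differentiable (at (x,y))"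
  shows "((\<lambda>t. f (x,t)) has_real_derivative part_y f (x,y)) (at y)"
proof -
  have d: "(f has_derivative frechet_derivative f (at (x,y))) (at (x,y))"
    using assms frechet_derivative_works by blast
  have "((\<lambda>t. (x,t)) has_derivative (\<lambda>h. (0,h))) (at y)"
    by (auto intro!: derivative_eq_intros)
  from diff_chain_at[OF this d] have
    "((\<lambda>t. f (x,t)) has_derivative (\<lambda>h. frechet_derivative f (at (x,y)) (0,h))) (at y)"
    by (simp add: o_def)
  moreover have "frechet_derivative f (at (x,y)) (0,h) = part_y f (x,y) * h" for h
    using linear_cmul[OF has_derivative_linear[OF d], of h "(0,1)"] by (simp add: part_y_def)
  ultimately show ?thesis by (simp add: has_field_derivative_def)
qed

lemma less_on_left_if_left_deriv_pos:
  fixes g :: "real \<Rightarrow> real"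
  assumes "(g has_real_derivative d) (at_left a)" "0 < d" "0 < r"
  shows "\<exists>t. a - r < t \<and> t < a \<and> g t < g a"
proof -
  obtain e where e: "e > 0" "\<forall>h>0. a - h \<in> {..<a} \<longrightarrow> h < e \<longrightarrow> g (a - h) < g a"
    using has_real_derivative_pos_inc_left[OF assms(1,2)] by blast
  then show ?thesis
    using \<open>0 < r\<close> by (intro exI[of _ "a - min e r / 2"]) auto
qed

lemma less_on_right_if_right_deriv_neg:
  fixes g :: "real \<Rightarrow> real"
  assumes "(g has_real_derivative d) (at_right a)" "d < 0" "0 < r"
  shows "\<exists>t. a < t \<and> t < a + r \<and> g t < g a"
proof -
  obtain e where e: "e > 0" "\<forall>h>0. a + h \<in> {a<..} \<longrightarrow> h < e \<longrightarrow> g a > g (a + h)"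
    using has_real_derivative_neg_dec_right[OF assms(1,2)] by blast
  then show ?thesis
    using \<open>0 < r\<close> by (intro exI[of _ "a + min e r / 2"]) auto
qed

lemma not_local_min_if_second_deriv_neg:
  fixes g g' :: "real \<Rightarrow> real"
  assumes r: "0 < r" and g: "\<And>t. t \<in> ball a r \<Longrightarrow> (g has_real_derivative g' t) (at t)"
    and g': "(g' has_real_derivative d) (at a)" and "d < 0"
  shows "\<exists>t\<in>ball a r. g t < g a"
proof (rule ccontr)
  assume "\<not> ?thesis"
  then have min: "\<forall>t. \<bar>a - t\<bar> < r \<longrightarrow> g a \<le> g t"
    by (auto simp: dist_real_def not_less)
  have "g' a = 0"
    using DERIV_local_min[OF g r min] r by simp
  obtain e where e: "e > 0" "\<forall>h>0. h < e \<longrightarrow> g' a > g' (a + h)"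
    using DERIV_neg_dec_right[OF g' \<open>d < 0\<close>] by blast
  define h where "h = min e r / 2"
  have h: "0 < h" "h < e" "h < r" using e r by (auto simp: h_def)
  obtain z where z: "a < z" "z < a + h" "g (a + h) - g a = h * g' z"
    using MVT2[of a "a + h" g g'] h g by (force simp: dist_real_def)
  have "g' z < 0" using e(2)[rule_format, of "z - a"] z h \<open>g' a = 0\<close> by auto
  then have "h * g' z < 0" using h(1) by (simp add: mult_pos_neg)
  then have "g (a + h) < g a" using z by simp
  moreover have "g a \<le> g (a + h)" using min h by simp
  ultimately show False by simp
qed

lemma not_local_min_if_laplacian_neg:
  fixes V Vx Vy :: "real \<times> real \<Rightarrow> real"
  assumes r: "0 < r"
    and V_x: "\<And>t. t \<in> ball x r \<Longrightarrow> ((\<lambda>s. V (s,y)) has_real_derivative Vx (t,y)) (at t)"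
    and V_xx: "((\<lambda>t. Vx (t,y)) has_real_derivative Vxx) (at x)"
    and V_y: "\<And>t. t \<in> ball y r \<Longrightarrow> ((\<lambda>s. V (x,s)) has_real_derivative Vy (x,t)) (at t)"
    and V_yy: "((\<lambda>t. Vy (x,t)) has_real_derivative Vyy) (at y)"
    and "Vxx + Vyy < 0"
  shows "\<exists>z\<in>ball (x,y) r. V z < V (x,y)"
proof -
  consider "Vxx < 0" | "Vyy < 0" using \<open>Vxx + Vyy < 0\<close> by linarith
  then show ?thesis
  proof cases
    case 1
    obtain t where "t \<in> ball x r" "V (t,y) < V (x,y)"
      using not_local_min_if_second_deriv_neg[OF r V_x V_xx 1] by blast
    then show ?thesis by (intro bexI[of _ "(t,y)"]) (auto simp: dist_Pair_Pair)
  next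
    case 2
    obtain t where "t \<in> ball y r" "V (x,t) < V (x,y)"
      using not_local_min_if_second_deriv_neg[OF r V_y V_yy 2] by blast
    then show ?thesis by (intro bexI[of _ "(x,t)"]) (auto simp: dist_Pair_Pair)
  qed
qed

lemma dist_sq_Pair: "(dist (x,y) (a,b))\<^sup>2 = (x - a)\<^sup>2 + (y - b)\<^sup>2"
  for x y a b :: real
  by (simp add: dist_Pair_Pair dist_real_def)

lemma one_less_square: "1 < a \<Longrightarrow> 1 < (a::real)\<^sup>2"
  using one_less_power[of a 2] by simp

lemma nonneg_if_no_negative_min:
  fixes V :: "'a::topological_space \<Rightarrow> real"
  assumes "compact K" "continuous_on K V"
    and "\<And>q. q \<in> K \<Longrightarrow> V q < 0 \<Longrightarrow> \<exists>z\<in>K. V z < V q"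
  shows "\<forall>q\<in>K. 0 \<le> V q"
proof (cases "K = {}")
  case False
  then obtain q where "q \<in> K" "\<forall>z\<in>K. V q \<le> V z"
    using continuous_attains_inf[OF assms(1) False assms(2)] by blast
  then show ?thesis using assms(3) by force
qed simp


lemma le_sqrt_mult_if_le_am_gm:
  fixes X A B :: real
  assumes A: "0 \<le> A" and B: "0 \<le> B" and bound: "\<And>l. 0 < l \<Longrightarrow> X \<le> A / (2*l) + l * B / 2"
  shows "X \<le> sqrt (A * B)"
proof (cases "A = 0 \<or> B = 0")
  case True
  have "X \<le> 0 + e" if e: "0 < e" for e
  proof (cases "A = 0")
    case True
    have "X \<le> (2*e/(B+1)) * B / 2" using bound[of "2*e/(B+1)"] e B True by simp
    also have "\<dots> \<le> e" using e B by (simp add: field_simps)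
    finally show ?thesis by simp
  next
    case False
    then have "B = 0" using True by simp
    have "X \<le> A / (2 * ((A+1)/(2*e)))" using bound[of "(A+1)/(2*e)"] e A \<open>B = 0\<close> by simp
    also have "\<dots> \<le> e" using e A by (simp add: field_simps)
    finally show ?thesis by simp
  qed
  then have "X \<le> 0" by (rule field_le_epsilon)
  moreover have "0 \<le> sqrt (A * B)" using A B by simp
  ultimately show ?thesis by linarith
next
  case False
  then have AB: "0 < A" "0 < B" using A B by auto
  define l where "l = sqrt (A / B)"
  have l: "0 < l" "l\<^sup>2 = A / B" using AB by (simp_all add: l_def)
  have "sqrt (A * B) = l * B"
    using AB by (simp add: l_def real_sqrt_mult real_sqrt_divide field_simps)
  moreover have "A / (2 * l) + l * B / 2 = l * B"
    using l AB by (simp add: power2_eq_square field_simps)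
  ultimately show ?thesis using bound[OF l(1)] by simp
qed

text \<open>Integrate |g'| \<le> g'^2 / (2l) + l/2 and optimise in l > 0.\<close>
lemma abs_diff_le_sqrt_energy:
  fixes g g' :: "real \<Rightarrow> real"
  assumes ab: "a \<le> b" and gc: "continuous_on {a..b} g"
    and gd: "\<And>t. t \<in> {a<..<b} \<Longrightarrow> (g has_real_derivative g' t) (at t)"
    and g'c: "continuous_on {a<..<b} g'"
    and I: "(\<integral>\<^sup>+t. ennreal ((g' t)\<^sup>2) * indicator {a<..<b} t \<partial>lborel) \<le> ennreal M" and M0: "0 \<le> M"
  shows "\<bar>g b - g a\<bar> \<le> sqrt (M * (b - a))"
proof -
  have ftc: "(g' has_integral (g b - g a)) {a<..<b}"
    unfolding has_integral_Icc_iff_Ioo[symmetric]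
    by (rule fundamental_theorem_of_calculus_interior[OF ab gc])
       (use gd in \<open>auto simp: has_real_derivative_iff_has_vector_derivative\<close>)
  define h where "h = (\<lambda>t. indicator {a<..<b} t * (g' t)\<^sup>2)"
  have "(\<lambda>t. indicator {a<..<b} t *\<^sub>R (g' t)\<^sup>2) \<in> borel_measurable borel"
    by (intro borel_measurable_continuous_on_indicator continuous_intros g'c) auto
  then have meas: "h \<in> borel_measurable borel" by (simp add: h_def)
  have eqi: "(\<integral>\<^sup>+t. ennreal (h t) \<partial>lborel) = (\<integral>\<^sup>+t. ennreal ((g' t)\<^sup>2) * indicator {a<..<b} t \<partial>lborel)"
    by (intro nn_integral_cong) (auto simp: indicator_def h_def)
  have h_eq: "h = (\<lambda>t. if t \<in> {a<..<b} then (g' t)\<^sup>2 else 0)"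
    by (auto simp: indicator_def h_def)
  have "(\<integral>\<^sup>+t. ennreal (h t) \<partial>lborel) = integral UNIV h"
    by (rule nn_integral_lborel_eq_integral) (use meas I eqi in \<open>auto simp: h_def le_less_trans\<close>)
  also have "integral UNIV h = integral {a<..<b} (\<lambda>t. (g' t)\<^sup>2)"
    unfolding h_eq by (rule integral_restrict_UNIV)
  finally have I2: "integral {a<..<b} (\<lambda>t. (g' t)\<^sup>2) \<le> M"
    using I eqi M0 by (metis ennreal_le_iff)
  have int2: "(\<lambda>t. (g' t)\<^sup>2) integrable_on {a<..<b}"
    using nn_integral_integrable_on[of h] meas I eqi
    unfolding h_eq integrable_restrict_UNIV by (auto simp: h_def le_less_trans)
  show ?thesis
  proof (rule le_sqrt_mult_if_le_am_gm[OF M0])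
    fix l :: real assume l: "0 < l"
    have ih: "((\<lambda>t. (g' t)\<^sup>2 / (2*l) + l/2) has_integral
        (integral {a<..<b} (\<lambda>t. (g' t)\<^sup>2) / (2*l) + (b - a) * (l/2))) {a<..<b}"
      using has_integral_const_real[of "l/2" a b] ab int2 unfolding has_integral_Icc_iff_Ioo
      by (intro has_integral_add has_integral_divide) (simp_all add: content_real has_integral_integral)
    have "\<bar>g b - g a\<bar> = norm (integral {a<..<b} g')" using integral_unique[OF ftc] by simp
    also have "\<dots> \<le> integral {a<..<b} (\<lambda>t. (g' t)\<^sup>2 / (2*l) + l/2)"
    proof (rule integral_norm_bound_integral)
      show "g' integrable_on {a<..<b}" using ftc by blast
      show "(\<lambda>t. (g' t)\<^sup>2 / (2*l) + l/2) integrable_on {a<..<b}" using ih by blast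
      fix t
      have "2 * l * \<bar>g' t\<bar> \<le> (g' t)\<^sup>2 + l\<^sup>2"
        using zero_le_power2[of "\<bar>g' t\<bar> - l"] by (simp add: power2_eq_square algebra_simps)
      then show "norm (g' t) \<le> (g' t)\<^sup>2 / (2*l) + l/2"
        using l by (simp add: field_simps power2_eq_square)
    qed
    also have "\<dots> \<le> M / (2*l) + l * (b - a) / 2"
      using integral_unique[OF ih] divide_right_mono[OF I2, of "2*l"] l by (simp add: mult.commute)
    finally show "\<bar>g b - g a\<bar> \<le> M / (2*l) + l * (b - a) / 2" .
  qed (use ab in simp)
qed

lemma abs_diff_le_sqrt_energy_subinterval:
  fixes g g' :: "real \<Rightarrow> real"
  assumes gc: "continuous_on {a..b} g"
    and gd: "\<And>t. t \<in> {a<..<b} \<Longrightarrow> (g has_real_derivative g' t) (at t)"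
    and g'c: "continuous_on {a<..<b} g'"
    and I: "(\<integral>\<^sup>+t. ennreal ((g' t)\<^sup>2) * indicator {a<..<b} t \<partial>lborel) \<le> ennreal M" and M0: "0 \<le> M"
    and uv: "u \<in> {a..b}" "v \<in> {a..b}"
  shows "\<bar>g v - g u\<bar> \<le> sqrt (M * (b - a))"
proof -
  have ordered: "\<bar>g v' - g u'\<bar> \<le> sqrt (M * (b - a))" if "a \<le> u'" "u' \<le> v'" "v' \<le> b" for u' v'
  proof -
    have "(\<integral>\<^sup>+t. ennreal ((g' t)\<^sup>2) * indicator {u'<..<v'} t \<partial>lborel)
        \<le> (\<integral>\<^sup>+t. ennreal ((g' t)\<^sup>2) * indicator {a<..<b} t \<partial>lborel)"
      using that by (intro nn_integral_mono) (auto simp: indicator_def)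
    then have "\<bar>g v' - g u'\<bar> \<le> sqrt (M * (v' - u'))"
      using that gc gd g'c I M0
      by (intro abs_diff_le_sqrt_energy[where g'=g'])
         (auto intro: continuous_on_subset[of "{a..b}"] continuous_on_subset[of "{a<..<b}"] order_trans)
    also have "\<dots> \<le> sqrt (M * (b - a))"
      using that M0 by (intro real_sqrt_le_mono mult_left_mono) auto
    finally show ?thesis .
  qed
  show ?thesis
    using ordered[of u v] ordered[of v u] uv by (cases "u \<le> v") (auto simp: abs_minus_commute)
qed

section \<open>Averaging over slices\<close>

lemma nn_integral_lborel_pair:
  fixes g :: "real \<times> real \<Rightarrow> ennreal"
  assumes "g \<in> borel_measurable borel"
  shows "(\<integral>\<^sup>+x. \<integral>\<^sup>+y. g (x,y) \<partial>lborel \<partial>lborel) = (\<integral>\<^sup>+p. g p \<partial>lborel)"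
    and "(\<integral>\<^sup>+y. \<integral>\<^sup>+x. g (x,y) \<partial>lborel \<partial>lborel) = (\<integral>\<^sup>+p. g p \<partial>lborel)"
proof -
  have m: "g \<in> borel_measurable (lborel \<Otimes>\<^sub>M lborel)"
    using assms by (simp add: lborel_prod)
  show "(\<integral>\<^sup>+x. \<integral>\<^sup>+y. g (x,y) \<partial>lborel \<partial>lborel) = (\<integral>\<^sup>+p. g p \<partial>lborel)"
    using lborel.nn_integral_fst[OF m] by (simp add: lborel_prod)
  show "(\<integral>\<^sup>+y. \<integral>\<^sup>+x. g (x,y) \<partial>lborel \<partial>lborel) = (\<integral>\<^sup>+p. g p \<partial>lborel)"
    using lborel_pair.nn_integral_snd[OF m] by (simp add: lborel_prod)
qed

lemma exists_vertical_slice_nn_integral_le: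
  fixes f :: "real \<times> real \<Rightarrow> ennreal"
  assumes f: "f \<in> borel_measurable borel" and ab: "a < b"
    and E: "(\<integral>\<^sup>+p. f p * indicator ({a<..<b} \<times> {c<..<d}) p \<partial>lborel) \<le> ennreal E"
    and E0: "0 \<le> E" and k: "E < k * (b - a)"
  shows "\<exists>x\<in>{a<..<b}. (\<integral>\<^sup>+y. f (x,y) * indicator {c<..<d} y \<partial>lborel) \<le> ennreal k"
proof (rule ccontr)
  assume "\<not> ?thesis"
  then have lt: "\<And>x. x \<in> {a<..<b} \<Longrightarrow> ennreal k \<le> (\<integral>\<^sup>+y. f (x,y) * indicator {c<..<d} y \<partial>lborel)"
    by (auto simp: not_le less_imp_le)
  have "0 < k * (b - a)" using E0 k by linarith
  then have k0: "k > 0" using ab by (simp add: zero_less_mult_iff)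
  have "ennreal (k * (b - a)) = (\<integral>\<^sup>+x. ennreal k * indicator {a<..<b} x \<partial>lborel)"
    using ab k0 by (simp add: nn_integral_cmult_indicator ennreal_mult)
  also have "\<dots> \<le> (\<integral>\<^sup>+x. (\<integral>\<^sup>+y. f (x,y) * indicator {c<..<d} y \<partial>lborel) * indicator {a<..<b} x \<partial>lborel)"
    using lt by (intro nn_integral_mono) (simp add: indicator_def)
  also have "\<dots> = (\<integral>\<^sup>+x. \<integral>\<^sup>+y. f (x,y) * indicator ({a<..<b} \<times> {c<..<d}) (x,y) \<partial>lborel \<partial>lborel)"
  proof (intro nn_integral_cong)
    fix x
    have "(\<integral>\<^sup>+y. f (x,y) * indicator {c<..<d} y \<partial>lborel) * indicator {a<..<b} x
        = (\<integral>\<^sup>+y. f (x,y) * indicator {c<..<d} y * indicator {a<..<b} x \<partial>lborel)"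
      by (rule nn_integral_multc[symmetric]) (use f in measurable)
    also have "\<dots> = (\<integral>\<^sup>+y. f (x,y) * indicator ({a<..<b} \<times> {c<..<d}) (x,y) \<partial>lborel)"
      by (intro nn_integral_cong) (auto simp: indicator_def)
    finally show "(\<integral>\<^sup>+y. f (x,y) * indicator {c<..<d} y \<partial>lborel) * indicator {a<..<b} x
        = (\<integral>\<^sup>+y. f (x,y) * indicator ({a<..<b} \<times> {c<..<d}) (x,y) \<partial>lborel)" .
  qed
  also have "\<dots> = (\<integral>\<^sup>+p. f p * indicator ({a<..<b} \<times> {c<..<d}) p \<partial>lborel)"
    by (rule nn_integral_lborel_pair(1))
       (intro borel_measurable_times_ennreal f borel_measurable_indicator borel_open open_Times; simp)
  also have "\<dots> \<le> ennreal E" by (rule E)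
  finally have "k * (b - a) \<le> E" using E0 by simp
  then show False using k by simp
qed

lemma exists_horizontal_slice_nn_integral_le:
  fixes f :: "real \<times> real \<Rightarrow> ennreal"
  assumes f: "f \<in> borel_measurable borel" and cd: "c < d"
    and E: "(\<integral>\<^sup>+p. f p * indicator ({a<..<b} \<times> {c<..<d}) p \<partial>lborel) \<le> ennreal E"
    and E0: "0 \<le> E" and k: "E < k * (d - c)"
  shows "\<exists>y\<in>{c<..<d}. (\<integral>\<^sup>+x. f (x,y) * indicator {a<..<b} x \<partial>lborel) \<le> ennreal k"
proof -
  have fs: "(\<lambda>p. f (snd p, fst p)) \<in> borel_measurable borel"
    using measurable_compose[OF borel_measurable_continuous_onI[OF continuous_on_swap] f]
    by (simp add: o_def prod.swap_def)
  have m: "(\<lambda>p. f p * indicator ({a<..<b} \<times> {c<..<d}) p) \<in> borel_measurable borel"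
    by (intro borel_measurable_times_ennreal f borel_measurable_indicator borel_open open_Times) simp_all
  have ms: "(\<lambda>p. f (snd p, fst p) * indicator ({c<..<d} \<times> {a<..<b}) p) \<in> borel_measurable borel"
    by (intro borel_measurable_times_ennreal fs borel_measurable_indicator borel_open open_Times) simp_all
  have "(\<integral>\<^sup>+p. f (snd p, fst p) * indicator ({c<..<d} \<times> {a<..<b}) p \<partial>lborel)
      = (\<integral>\<^sup>+p. f p * indicator ({a<..<b} \<times> {c<..<d}) p \<partial>lborel)"
    using nn_integral_lborel_pair(1)[OF ms] nn_integral_lborel_pair(2)[OF m]
    by (simp add: indicator_def conj_ac)
  then show ?thesis
    using exists_vertical_slice_nn_integral_le[OF fs cd _ E0 k] E by simp
qed

locale half_strip_problem =
  fixes \<epsilon> \<delta> :: real and \<rho> :: "real \<times> real \<Rightarrow> real"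
  assumes eps: "\<epsilon> > 0" and del: "\<delta> > 0"
    and harm: "harmonic_on \<rho> (Omega_R \<delta> - closure (ball (cR0 \<epsilon>) 1))"
    and cont: "continuous_on ((Omega_R \<delta> - closure (ball (cR0 \<epsilon>) 1))
                  \<union> ({0} \<times> {-1 - \<delta>/2 <..< 1 + \<delta>/2})
                  \<union> ({0<..} \<times> {-1 - \<delta>/2, 1 + \<delta>/2})
                  \<union> frontier (ball (cR0 \<epsilon>) 1)) \<rho>"
    and neumann: "\<forall>x>0. ((\<lambda>t. \<rho> (x, t)) has_real_derivative 0) (at_left (1 + \<delta>/2))
                      \<and> ((\<lambda>t. \<rho> (x, t)) has_real_derivative 0) (at_right (-1 - \<delta>/2))"
    and dirichlet: "\<forall>y\<in>{-1 - \<delta>/2 <..< 1 + \<delta>/2}. \<rho> (0, y) = 0"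
    and pos_circle: "\<forall>p\<in>frontier (ball (cR0 \<epsilon>) 1). \<rho> p > 0"
    and finite_energy: "grad_sq \<rho> integrable_on (Omega_R \<delta> - closure (ball (cR0 \<epsilon>) 1))"
begin

definition "T = 1 + \<delta>/2"
definition "cx = 1 + \<epsilon>/2"
definition "D = Omega_R \<delta> - closure (ball (cR0 \<epsilon>) 1)"
definition "S = D \<union> ({0} \<times> {-1 - \<delta>/2 <..< 1 + \<delta>/2})
                  \<union> ({0<..} \<times> {-1 - \<delta>/2, 1 + \<delta>/2})
                  \<union> frontier (ball (cR0 \<epsilon>) 1)"

lemma T_gt_1: "1 < T" using del by (simp add: T_def)

lemma cx_gt_1: "1 < cx" using eps by (simp add: cx_def)

lemma dist_cR0: "dist (cR0 \<epsilon>) (x,y) = sqrt ((x - cx)\<^sup>2 + y\<^sup>2)"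
  by (simp add: cR0_def cx_def dist_Pair_Pair dist_real_def dist_commute)

lemma D_iff: "(x,y) \<in> D \<longleftrightarrow> 0 < x \<and> -T < y \<and> y < T \<and> 1 < (x - cx)\<^sup>2 + y\<^sup>2"
proof -
  have "1 < sqrt a \<longleftrightarrow> 1 < a" for a :: real by (metis real_sqrt_less_iff real_sqrt_one)
  then show ?thesis
    unfolding D_def Omega_R_def T_def closure_ball[OF zero_less_one]
    by (auto simp: mem_cball dist_cR0 not_le)
qed

lemma circle_iff: "(x,y) \<in> frontier (ball (cR0 \<epsilon>) 1) \<longleftrightarrow> (x - cx)\<^sup>2 + y\<^sup>2 = 1"
proof -
  have "sqrt a = 1 \<longleftrightarrow> a = 1" for a :: real by (metis real_sqrt_eq_iff real_sqrt_one)
  then show ?thesis by (simp add: dist_cR0)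
qed

lemma S_iff: "(x,y) \<in> S \<longleftrightarrow> (x,y) \<in> D \<or> (x = 0 \<and> -T < y \<and> y < T)
   \<or> (0 < x \<and> (y = -T \<or> y = T)) \<or> (x - cx)\<^sup>2 + y\<^sup>2 = 1"
  unfolding S_def using circle_iff[of x y] by (auto simp: T_def)

lemma D_subset_S: "D \<subseteq> S" by (auto simp: S_def)

lemma wall_in_S: "0 < x \<Longrightarrow> y = -T \<or> y = T \<Longrightarrow> (x,y) \<in> S"
  by (auto simp: S_iff)

lemma open_D: "open D"
  using harm by (simp add: harmonic_on_def D_def)

lemma continuous_on_S: "continuous_on S \<rho>"
  using cont by (simp add: S_def D_def)

lemma harmonic_line_derivs:
  assumes "(x,y) \<in> D"
  shows "((\<lambda>t. \<rho> (t,y)) has_real_derivative part_x \<rho> (x,y)) (at x)"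
    "((\<lambda>t. \<rho> (x,t)) has_real_derivative part_y \<rho> (x,y)) (at y)"
    "((\<lambda>t. part_x \<rho> (t,y)) has_real_derivative part_x (part_x \<rho>) (x,y)) (at x)"
    "((\<lambda>t. part_y \<rho> (x,t)) has_real_derivative part_y (part_y \<rho>) (x,y)) (at y)"
    "part_x (part_x \<rho>) (x,y) + part_y (part_y \<rho>) (x,y) = 0"
  using harm assms unfolding harmonic_on_def D_def
  by (auto intro!: has_real_derivative_part_x has_real_derivative_part_y)

lemma neumann_top: "0 < x \<Longrightarrow> ((\<lambda>t. \<rho> (x, t)) has_real_derivative 0) (at_left T)"
  using neumann by (simp add: T_def)

lemma neumann_bottom: "0 < x \<Longrightarrow> ((\<lambda>t. \<rho> (x, t)) has_real_derivative 0) (at_right (-T))"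
  using neumann by (simp add: T_def)

lemma dirichlet_left: "-T < y \<Longrightarrow> y < T \<Longrightarrow> \<rho> (0,y) = 0"
  using dirichlet by (simp add: T_def)

lemma pos_on_circle: "(x - cx)\<^sup>2 + y\<^sup>2 = 1 \<Longrightarrow> 0 < \<rho> (x,y)"
  using pos_circle circle_iff[of x y] by blast

lemma D_near_left: "0 < x \<Longrightarrow> x < \<epsilon>/2 \<Longrightarrow> -T < y \<Longrightarrow> y < T \<Longrightarrow> (x,y) \<in> D"
proof -
  assume a: "0 < x" "x < \<epsilon>/2" "-T < y" "y < T"
  have "1 < (cx - x)\<^sup>2" using a by (intro one_less_square) (simp add: cx_def)
  then have "1 < (x - cx)\<^sup>2 + y\<^sup>2"
    using zero_le_power2[of y] power2_commute[of x cx] by linarith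
  then show ?thesis using a D_iff by simp
qed

lemma D_right: "cx + 1 < x \<Longrightarrow> -T < y \<Longrightarrow> y < T \<Longrightarrow> (x,y) \<in> D"
proof -
  assume a: "cx + 1 < x" "-T < y" "y < T"
  have "1 < (x - cx)\<^sup>2" using a by (intro one_less_square) simp
  then have "1 < (x - cx)\<^sup>2 + y\<^sup>2" using zero_le_power2[of y] by linarith
  moreover have "0 < x" using a cx_gt_1 by simp
  ultimately show ?thesis using a D_iff by simp
qed

lemma D_beyond_1: "0 < x \<Longrightarrow> 1 < \<bar>y\<bar> \<Longrightarrow> \<bar>y\<bar> < T \<Longrightarrow> (x,y) \<in> D"
proof -
  assume a: "0 < x" "1 < \<bar>y\<bar>" "\<bar>y\<bar> < T"
  then have "1 < \<bar>y\<bar>\<^sup>2" by (intro one_less_square)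
  then have "1 < (x - cx)\<^sup>2 + y\<^sup>2" using zero_le_power2[of "x - cx"] power2_abs[of y] by linarith
  moreover have "-T < y" "y < T" using a(3) by auto
  ultimately show ?thesis using a D_iff by simp
qed

lemma D_upwards: "(x,y) \<in> D \<Longrightarrow> 0 \<le> y \<Longrightarrow> y \<le> t \<Longrightarrow> t < T \<Longrightarrow> (x,t) \<in> D"
proof -
  assume a: "(x,y) \<in> D" "0 \<le> y" "y \<le> t" "t < T"
  then have "y\<^sup>2 \<le> t\<^sup>2" by (simp add: power_mono)
  moreover have "0 < x" "1 < (x - cx)\<^sup>2 + y\<^sup>2" using a(1) D_iff by auto
  ultimately have "0 < x" "1 < (x - cx)\<^sup>2 + t\<^sup>2" by linarith+
  then show ?thesis using a(2-4) T_gt_1 by (simp add: D_iff)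
qed

lemma D_reflect: "(x,-y) \<in> D \<longleftrightarrow> (x,y) \<in> D"
  by (auto simp: D_iff)

lemma continuous_on_line_x: "(\<And>t. t \<in> A \<Longrightarrow> (t,y) \<in> S) \<Longrightarrow> continuous_on A (\<lambda>t. \<rho> (t,y))"
  by (rule continuous_on_compose2[OF continuous_on_S, of _ "\<lambda>t. (t,y)"]) (auto intro!: continuous_intros)

lemma continuous_on_line_y: "(\<And>t. t \<in> A \<Longrightarrow> (x,t) \<in> S) \<Longrightarrow> continuous_on A (\<lambda>t. \<rho> (x,t))"
  by (rule continuous_on_compose2[OF continuous_on_S, of _ "\<lambda>t. (x,t)"]) (auto intro!: continuous_intros)

lemma in_closed_on_closure:
  assumes "closed C" "\<And>q. q \<in> D \<Longrightarrow> \<rho> q \<in> C" "p \<in> S" "p \<in> closure D"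
  shows "\<rho> p \<in> C"
proof -
  obtain C' where C': "closed C'" "S \<inter> \<rho> -` C = S \<inter> C'"
    using continuous_closedin_preimage[OF continuous_on_S \<open>closed C\<close>] by (auto simp: closedin_closed)
  have "D \<subseteq> C'" using C'(2) D_subset_S assms(2) by blast
  then have "closure D \<subseteq> C'" using C'(1) by (rule closure_minimal)
  then show ?thesis using C'(2) assms(3,4) by blast
qed

section \<open>A minimum principle with barriers\<close>

text \<open>A negative minimum of \<rho> + G on K can only lie in the interior, where \<Delta>\<rho> = 0 and
  \<Delta>G < 0 exclude it, or on the walls y = \<plusminus>T, where the Neumann condition and the sign of
  \<partial>G/\<partial>y exclude it.\<close>
lemma barrier_nonneg:
  fixes K :: "(real \<times> real) set" and G Gx Gy Gxx Gyy :: "real \<times> real \<Rightarrow> real"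
  assumes K: "compact K" "K \<subseteq> S" and G: "continuous_on K G"
    and G_x: "\<And>x y. (x,y) \<in> K \<Longrightarrow> ((\<lambda>t. G (t,y)) has_real_derivative Gx (x,y)) (at x)"
    and G_y: "\<And>x y. (x,y) \<in> K \<Longrightarrow> ((\<lambda>t. G (x,t)) has_real_derivative Gy (x,y)) (at y)"
    and G_xx: "\<And>x y. (x,y) \<in> D \<inter> interior K \<Longrightarrow> ((\<lambda>t. Gx (t,y)) has_real_derivative Gxx (x,y)) (at x)"
    and G_yy: "\<And>x y. (x,y) \<in> D \<inter> interior K \<Longrightarrow> ((\<lambda>t. Gy (x,t)) has_real_derivative Gyy (x,y)) (at y)"
    and superharmonic: "\<And>q. q \<in> D \<inter> interior K \<Longrightarrow> Gxx q + Gyy q < 0"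
    and neg_cases: "\<And>q. q \<in> K \<Longrightarrow> \<rho> q + G q < 0 \<Longrightarrow> q \<in> D \<inter> interior K \<or> snd q = T \<or> snd q = -T"
    and top: "\<And>x. (x,T) \<in> K \<Longrightarrow> \<rho> (x,T) + G (x,T) < 0 \<Longrightarrow>
                0 < x \<and> 0 < Gy (x,T) \<and> (\<exists>h>0. {x} \<times> {T-h<..<T} \<subseteq> K)"
    and bottom: "\<And>x. (x,-T) \<in> K \<Longrightarrow> \<rho> (x,-T) + G (x,-T) < 0 \<Longrightarrow>
                0 < x \<and> Gy (x,-T) < 0 \<and> (\<exists>h>0. {x} \<times> {-T<..<-T+h} \<subseteq> K)"
  shows "\<forall>q\<in>K. 0 \<le> \<rho> q + G q"
proof (rule nonneg_if_no_negative_min[OF K(1)])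
  show "continuous_on K (\<lambda>q. \<rho> q + G q)"
    using continuous_on_subset[OF continuous_on_S K(2)] G by (intro continuous_intros)
  fix q assume qK: "q \<in> K" and Vq: "\<rho> q + G q < 0"
  obtain x y where q: "q = (x,y)" by (cases q)
  consider "q \<in> D \<inter> interior K" | "y = T" | "y = -T" using neg_cases[OF qK Vq] q by auto
  then show "\<exists>z\<in>K. \<rho> z + G z < \<rho> q + G q"
  proof cases
    case 1
    have "open (D \<inter> interior K)" using open_D by (simp add: open_Int)
    then obtain r where r: "0 < r" "ball q r \<subseteq> D \<inter> interior K"
      using 1 open_contains_ball by blast
    have inx: "(t,y) \<in> D \<inter> interior K" if "t \<in> ball x r" for t
      using that q by (intro subsetD[OF r(2)]) (auto simp: dist_Pair_Pair dist_commute)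
    have iny: "(x,t) \<in> D \<inter> interior K" if "t \<in> ball y r" for t
      using that q by (intro subsetD[OF r(2)]) (auto simp: dist_Pair_Pair dist_commute)
    have qD: "(x,y) \<in> D \<inter> interior K" using 1 q by simp
    have "\<exists>z\<in>ball (x,y) r. \<rho> z + G z < \<rho> (x,y) + G (x,y)"
    proof (rule not_local_min_if_laplacian_neg[OF r(1)])
      show "((\<lambda>s. \<rho> (s,y) + G (s,y)) has_real_derivative part_x \<rho> (t,y) + Gx (t,y)) (at t)"
        if "t \<in> ball x r" for t
        using inx[OF that] interior_subset
        by (intro DERIV_add harmonic_line_derivs(1) G_x) auto
      show "((\<lambda>s. \<rho> (x,s) + G (x,s)) has_real_derivative part_y \<rho> (x,t) + Gy (x,t)) (at t)"
        if "t \<in> ball y r" for t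
        using iny[OF that] interior_subset
        by (intro DERIV_add harmonic_line_derivs(2) G_y) auto
      show "((\<lambda>t. part_x \<rho> (t,y) + Gx (t,y)) has_real_derivative
          part_x (part_x \<rho>) (x,y) + Gxx (x,y)) (at x)"
        using qD by (intro DERIV_add harmonic_line_derivs(3) G_xx) auto
      show "((\<lambda>t. part_y \<rho> (x,t) + Gy (x,t)) has_real_derivative
          part_y (part_y \<rho>) (x,y) + Gyy (x,y)) (at y)"
        using qD by (intro DERIV_add harmonic_line_derivs(4) G_yy) auto
      show "part_x (part_x \<rho>) (x,y) + Gxx (x,y) + (part_y (part_y \<rho>) (x,y) + Gyy (x,y)) < 0"
        using harmonic_line_derivs(5)[of x y] superharmonic[OF qD] qD by simp
    qed
    then show ?thesis using r q interior_subset by blast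
  next
    case 2
    obtain h where h: "0 < x" "0 < Gy (x,T)" "0 < h" "{x} \<times> {T-h<..<T} \<subseteq> K"
      using top[of x] qK Vq q 2 by auto
    have "((\<lambda>t. \<rho> (x,t) + G (x,t)) has_real_derivative Gy (x,T)) (at_left T)"
      using DERIV_add[OF neumann_top[OF h(1)] has_field_derivative_at_within[OF G_y]] qK q 2 by simp
    then obtain t where "T - h < t" "t < T" "\<rho> (x,t) + G (x,t) < \<rho> (x,T) + G (x,T)"
      using less_on_left_if_left_deriv_pos h(2,3) by blast
    then show ?thesis using h(4) q 2 by (intro bexI[of _ "(x,t)"]) auto
  next
    case 3
    obtain h where h: "0 < x" "Gy (x,-T) < 0" "0 < h" "{x} \<times> {-T<..<-T+h} \<subseteq> K"
      using bottom[of x] qK Vq q 3 by auto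
    have "((\<lambda>t. \<rho> (x,t) + G (x,t)) has_real_derivative Gy (x,-T)) (at_right (-T))"
      using DERIV_add[OF neumann_bottom[OF h(1)] has_field_derivative_at_within[OF G_y]] qK q 3 by simp
    then obtain t where "-T < t" "t < -T + h" "\<rho> (x,t) + G (x,t) < \<rho> (x,-T) + G (x,-T)"
      using less_on_right_if_right_deriv_neg h(2,3) by blast
    then show ?thesis using h(4) q 3 by (intro bexI[of _ "(x,t)"]) auto
  qed
qed

end

section \<open>Consequences of the finite energy\<close>

context half_strip_problem
begin

definition "energy_dens = (\<lambda>p. ennreal (indicator D p * grad_sq \<rho> p))"

definition "energy = integral D (grad_sq \<rho>)"

lemma continuous_on_part_x: "continuous_on D (part_x \<rho>)"
  using harm unfolding harmonic_on_def D_def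
  by (intro continuous_at_imp_continuous_on) (auto intro: differentiable_imp_continuous_within)

lemma continuous_on_part_y: "continuous_on D (part_y \<rho>)"
  using harm unfolding harmonic_on_def D_def
  by (intro continuous_at_imp_continuous_on) (auto intro: differentiable_imp_continuous_within)

lemma energy_dens_measurable: "energy_dens \<in> borel_measurable borel"
proof -
  have "continuous_on D (grad_sq \<rho>)"
    unfolding grad_sq_def[abs_def] by (intro continuous_intros continuous_on_part_x continuous_on_part_y)
  then have "(\<lambda>p. indicator D p *\<^sub>R grad_sq \<rho> p) \<in> borel_measurable borel"
    by (intro borel_measurable_continuous_on_indicator borel_open open_D)
  then show ?thesis unfolding energy_dens_def by simp
qed

lemma nn_integral_energy_dens: "(\<integral>\<^sup>+p. energy_dens p \<partial>lborel) = ennreal energy"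
  and energy_nonneg: "0 \<le> energy"
proof -
  have hi: "(grad_sq \<rho> has_integral energy) D"
    using finite_energy by (simp add: energy_def D_def has_integral_integral)
  have nonneg: "0 \<le> grad_sq \<rho> p" for p by (simp add: grad_sq_def)
  show "(\<integral>\<^sup>+p. energy_dens p \<partial>lborel) = ennreal energy"
    unfolding energy_dens_def using nn_integral_has_integral_lebesgue[OF _ hi] nonneg by simp
  show "0 \<le> energy" using has_integral_nonneg[OF hi] nonneg by simp
qed

lemma nn_integral_energy_dens_le: "(\<integral>\<^sup>+p. energy_dens p * indicator A p \<partial>lborel) \<le> ennreal energy"
proof -
  have "(\<integral>\<^sup>+p. energy_dens p * indicator A p \<partial>lborel) \<le> (\<integral>\<^sup>+p. energy_dens p \<partial>lborel)"
    by (intro nn_integral_mono) (auto simp: indicator_def)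
  then show ?thesis using nn_integral_energy_dens by simp
qed

lemma horizontal_oscillation_le:
  assumes cl: "\<And>t. t \<in> {a..b} \<Longrightarrow> (t,y) \<in> S" and op: "\<And>t. t \<in> {a<..<b} \<Longrightarrow> (t,y) \<in> D"
    and I: "(\<integral>\<^sup>+t. energy_dens (t,y) * indicator {a<..<b} t \<partial>lborel) \<le> ennreal M" and "0 \<le> M"
    and "u \<in> {a..b}" "v \<in> {a..b}"
  shows "\<bar>\<rho> (v,y) - \<rho> (u,y)\<bar> \<le> sqrt (M * (b - a))"
proof (rule abs_diff_le_sqrt_energy_subinterval[where g = "\<lambda>t. \<rho> (t,y)" and g' = "\<lambda>t. part_x \<rho> (t,y)"])
  show "continuous_on {a..b} (\<lambda>t. \<rho> (t,y))" using cl by (rule continuous_on_line_x)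
  show "((\<lambda>t. \<rho> (t,y)) has_real_derivative part_x \<rho> (t,y)) (at t)" if "t \<in> {a<..<b}" for t
    using op[OF that] by (rule harmonic_line_derivs(1))
  show "continuous_on {a<..<b} (\<lambda>t. part_x \<rho> (t,y))"
    using op by (intro continuous_on_compose2[OF continuous_on_part_x]) (auto intro!: continuous_intros)
  have "(\<integral>\<^sup>+t. ennreal ((part_x \<rho> (t,y))\<^sup>2) * indicator {a<..<b} t \<partial>lborel)
      \<le> (\<integral>\<^sup>+t. energy_dens (t,y) * indicator {a<..<b} t \<partial>lborel)"
    using op by (intro nn_integral_mono) (simp add: energy_dens_def grad_sq_def indicator_def)
  then show "(\<integral>\<^sup>+t. ennreal ((part_x \<rho> (t,y))\<^sup>2) * indicator {a<..<b} t \<partial>lborel) \<le> ennreal M"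
    using I by (rule order_trans)
qed (use assms in auto)

lemma vertical_oscillation_le:
  assumes cl: "\<And>t. t \<in> {a..b} \<Longrightarrow> (x,t) \<in> S" and op: "\<And>t. t \<in> {a<..<b} \<Longrightarrow> (x,t) \<in> D"
    and I: "(\<integral>\<^sup>+t. energy_dens (x,t) * indicator {a<..<b} t \<partial>lborel) \<le> ennreal M" and "0 \<le> M"
    and "u \<in> {a..b}" "v \<in> {a..b}"
  shows "\<bar>\<rho> (x,v) - \<rho> (x,u)\<bar> \<le> sqrt (M * (b - a))"
proof (rule abs_diff_le_sqrt_energy_subinterval[where g = "\<lambda>t. \<rho> (x,t)" and g' = "\<lambda>t. part_y \<rho> (x,t)"])
  show "continuous_on {a..b} (\<lambda>t. \<rho> (x,t))" using cl by (rule continuous_on_line_y)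
  show "((\<lambda>t. \<rho> (x,t)) has_real_derivative part_y \<rho> (x,t)) (at t)" if "t \<in> {a<..<b}" for t
    using op[OF that] by (rule harmonic_line_derivs(2))
  show "continuous_on {a<..<b} (\<lambda>t. part_y \<rho> (x,t))"
    using op by (intro continuous_on_compose2[OF continuous_on_part_y]) (auto intro!: continuous_intros)
  have "(\<integral>\<^sup>+t. ennreal ((part_y \<rho> (x,t))\<^sup>2) * indicator {a<..<b} t \<partial>lborel)
      \<le> (\<integral>\<^sup>+t. energy_dens (x,t) * indicator {a<..<b} t \<partial>lborel)"
    using op by (intro nn_integral_mono) (simp add: energy_dens_def grad_sq_def indicator_def)
  then show "(\<integral>\<^sup>+t. ennreal ((part_y \<rho> (x,t))\<^sup>2) * indicator {a<..<b} t \<partial>lborel) \<le> ennreal M"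
    using I by (rule order_trans)
qed (use assms in auto)

text \<open>Monotone convergence: the strips {0 < x < w} shrink to the empty set.\<close>
lemma energy_near_left_small:
  assumes e: "0 < e" and w0: "0 < w0"
  shows "\<exists>w. 0 < w \<and> w < w0 \<and> (\<integral>\<^sup>+p. energy_dens p * indicator ({0<..<w} \<times> UNIV) p \<partial>lborel) < ennreal e"
proof -
  define wn where "wn = (\<lambda>n::nat. w0 / (real n + 2))"
  define fn where "fn = (\<lambda>n p. energy_dens p * indicator ({0<..<wn n} \<times> UNIV) p)"
  have wn: "0 < wn n" "wn n < w0" for n
  proof -
    show "0 < wn n" using w0 by (simp add: wn_def)
    have "w0 * 1 < w0 * (real n + 2)" using w0 by (intro mult_strict_left_mono) auto
    then show "wn n < w0" by (simp add: wn_def divide_less_eq algebra_simps)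
  qed
  have dec: "decseq fn"
  proof (rule decseq_SucI, rule le_funI)
    fix n p
    have "wn (Suc n) \<le> wn n" using w0 by (simp add: wn_def frac_le)
    then show "fn (Suc n) p \<le> fn n p" by (auto simp: fn_def indicator_def)
  qed
  have meas: "fn n \<in> borel_measurable lborel" for n
    unfolding fn_def
    by (simp, intro borel_measurable_times_ennreal energy_dens_measurable borel_measurable_indicator
        borel_open open_Times) auto
  have fin: "(\<integral>\<^sup>+p. fn n p \<partial>lborel) < \<infinity>" for n
    using nn_integral_energy_dens_le[of "{0<..<wn n} \<times> UNIV"] unfolding fn_def
    by (simp add: le_less_trans[OF _ ennreal_less_top])
  have "\<exists>n. fn n p = 0" for p
  proof (cases "0 < fst p")
    case True
    obtain n where "w0 / fst p < real n" using reals_Archimedean2 by blast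
    then have "wn n < fst p" using True w0 by (simp add: wn_def field_simps)
    then show ?thesis by (intro exI[of _ n]) (auto simp: fn_def indicator_def)
  qed (auto simp: fn_def indicator_def)
  then have "(INF n. fn n p) = 0" for p
    by (metis INF_lower UNIV_I le_zero_eq)
  moreover have "(\<integral>\<^sup>+p. (INF n. fn n p) \<partial>lborel) = (INF n. integral\<^sup>N lborel (fn n))"
    by (rule nn_integral_monotone_convergence_INF_decseq[OF dec meas fin])
  ultimately have "(INF n. integral\<^sup>N lborel (fn n)) < ennreal e" using e by simp
  then obtain n where "integral\<^sup>N lborel (fn n) < ennreal e" by (auto simp: INF_less_iff)
  then show ?thesis using wn[of n] unfolding fn_def by blast
qed

text \<open>In a corner of the strip of width 2\<tau> with small energy, a horizontal slice through
  the Dirichlet side and a vertical slice near it carry little energy, so \<rho> is almost 0 on both.\<close>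
lemma corner_cut:
  assumes \<tau>: "0 < \<tau>" "2*\<tau> < \<epsilon>/2" and c: "-T \<le> c" "c + 2*\<tau> \<le> T"
    and c1: "c \<le> c1" "c1 + \<tau> \<le> c + 2*\<tau>" and \<alpha>: "0 < \<alpha>"
    and small: "(\<integral>\<^sup>+p. energy_dens p * indicator ({0<..<2*\<tau>} \<times> UNIV) p \<partial>lborel) < ennreal ((\<alpha>/4)\<^sup>2)"
  shows "\<exists>s\<in>{\<tau><..<2*\<tau>}. \<exists>y\<in>{c1<..<c1+\<tau>}.
           (\<forall>t\<in>{0..s}. -\<alpha> \<le> \<rho> (t,y)) \<and> (\<forall>t\<in>{c..c+2*\<tau>}. -\<alpha> \<le> \<rho> (s,t))"
proof -
  define e where "e = (\<alpha>/4)\<^sup>2"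
  have e: "0 < e" using \<alpha> by (simp add: e_def)
  have "2*e/\<tau> * (2*\<tau>) = (\<alpha>/2)\<^sup>2" using \<tau> by (simp add: e_def power2_eq_square)
  then have sqrt_e: "sqrt (2*e/\<tau> * (2*\<tau>)) = \<alpha>/2" using \<alpha> by simp
  have sub: "(\<integral>\<^sup>+p. energy_dens p * indicator B p \<partial>lborel) \<le> ennreal e"
    if "B \<subseteq> {0<..<2*\<tau>} \<times> UNIV" for B
  proof -
    have "(\<integral>\<^sup>+p. energy_dens p * indicator B p \<partial>lborel)
        \<le> (\<integral>\<^sup>+p. energy_dens p * indicator ({0<..<2*\<tau>} \<times> UNIV) p \<partial>lborel)"
      using that by (intro nn_integral_mono) (auto simp: indicator_def)
    then show ?thesis using small by (simp add: e_def)
  qed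
  have k: "e < (2*e/\<tau>) * ((c1+\<tau>) - c1)" "e < (2*e/\<tau>) * (2*\<tau> - \<tau>)"
    using e \<tau> by auto
  have b1: "(\<integral>\<^sup>+p. energy_dens p * indicator ({0<..<2*\<tau>} \<times> {c1<..<c1+\<tau>}) p \<partial>lborel) \<le> ennreal e"
    by (rule sub) auto
  have b2: "(\<integral>\<^sup>+p. energy_dens p * indicator ({\<tau><..<2*\<tau>} \<times> {c<..<c+2*\<tau>}) p \<partial>lborel) \<le> ennreal e"
    by (rule sub) (use \<tau> in auto)
  obtain y where y: "y \<in> {c1<..<c1+\<tau>}"
    "(\<integral>\<^sup>+x. energy_dens (x,y) * indicator {0<..<2*\<tau>} x \<partial>lborel) \<le> ennreal (2*e/\<tau>)"
    using exists_horizontal_slice_nn_integral_le[OF energy_dens_measurable _ b1 _ k(1)] e \<tau> by auto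
  obtain s where s: "s \<in> {\<tau><..<2*\<tau>}"
    "(\<integral>\<^sup>+t. energy_dens (s,t) * indicator {c<..<c+2*\<tau>} t \<partial>lborel) \<le> ennreal (2*e/\<tau>)"
    using exists_vertical_slice_nn_integral_le[OF energy_dens_measurable _ b2 _ k(2)] e \<tau> by auto
  have yT: "-T < y" "y < T" using y c c1 \<tau> by auto
  have M0: "0 \<le> 2*e/\<tau>" using e \<tau> by simp
  have H: "\<bar>\<rho> (t,y) - \<rho> (0,y)\<bar> \<le> \<alpha>/2" if "t \<in> {0..s}" for t
  proof -
    have "\<bar>\<rho> (t,y) - \<rho> (0,y)\<bar> \<le> sqrt (2*e/\<tau> * (2*\<tau> - 0))"
    proof (rule horizontal_oscillation_le[OF _ _ y(2) M0])
      show "(t,y) \<in> S" if "t \<in> {0..2*\<tau>}" for t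
      proof (cases "t = 0")
        case False
        then have "(t,y) \<in> D" using that \<tau> yT by (intro D_near_left) auto
        then show ?thesis using D_subset_S by blast
      qed (use yT in \<open>simp add: S_iff\<close>)
      show "(t,y) \<in> D" if "t \<in> {0<..<2*\<tau>}" for t
        using that \<tau> yT D_near_left by auto
    qed (use that s \<tau> in auto)
    then show ?thesis using sqrt_e by simp
  qed
  have V: "\<bar>\<rho> (s,t) - \<rho> (s,y)\<bar> \<le> \<alpha>/2" if "t \<in> {c..c+2*\<tau>}" for t
  proof -
    have "\<bar>\<rho> (s,t) - \<rho> (s,y)\<bar> \<le> sqrt (2*e/\<tau> * (c + 2*\<tau> - c))"
    proof (rule vertical_oscillation_le[OF _ _ s(2) M0])
      show "(s,u) \<in> S" if "u \<in> {c..c+2*\<tau>}" for u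
      proof (cases "u = -T \<or> u = T")
        case False
        then have "(s,u) \<in> D" using that \<tau> c s by (intro D_near_left) auto
        then show ?thesis using D_subset_S by blast
      qed (use s \<tau> wall_in_S in auto)
      show "(s,u) \<in> D" if "u \<in> {c<..<c+2*\<tau>}" for u
        using that \<tau> c s D_near_left by auto
    qed (use that y c1 \<tau> in auto)
    then show ?thesis using sqrt_e by simp
  qed
  have "\<rho> (0,y) = 0" using dirichlet_left yT by simp
  then have hor: "-\<alpha>/2 \<le> \<rho> (t,y)" if "t \<in> {0..s}" for t
    using H[OF that] abs_ge_minus_self[of "\<rho> (t,y) - \<rho> (0,y)"] by linarith
  have "-\<alpha> \<le> \<rho> (s,t)" if "t \<in> {c..c+2*\<tau>}" for t
    using V[OF that] abs_ge_minus_self[of "\<rho> (s,t) - \<rho> (s,y)"] hor[of s] s \<tau> by auto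
  then show ?thesis
    using hor s y \<alpha> by (intro bexI[of _ s] bexI[of _ y] conjI ballI) force+
qed

text \<open>Far to the right, \<rho> grows at most like \<surd>L along a horizontal slice of small energy, and
  oscillates boundedly along a vertical slice: so \<rho> \<ge> -\<eta>L on some vertical segment x = L.\<close>
lemma far_right_lower_bound:
  assumes \<eta>: "0 < \<eta>"
  shows "\<exists>L>L0. \<forall>t\<in>{-T..T}. -\<eta> * L \<le> \<rho> (L,t)"
proof -
  define x0 where "x0 = cx + 2"
  have S_right: "(x,t) \<in> S" if "cx + 1 < x" "t \<in> {-T..T}" for x t
  proof (cases "t = -T \<or> t = T")
    case False
    then have "(x,t) \<in> D" using that by (intro D_right) auto
    then show ?thesis using D_subset_S by blast
  qed (use that cx_gt_1 wall_in_S in auto)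
  have "continuous_on {-T..T} (\<lambda>t. \<bar>\<rho> (x0,t)\<bar>)"
    by (intro continuous_intros continuous_on_line_y) (use S_right in \<open>auto simp: x0_def\<close>)
  then obtain t0 where t0: "\<forall>t\<in>{-T..T}. \<bar>\<rho> (x0,t)\<bar> \<le> \<bar>\<rho> (x0,t0)\<bar>"
    using continuous_attains_sup[of "{-T..T}" "\<lambda>t. \<bar>\<rho> (x0,t)\<bar>"] T_gt_1 by fastforce
  define C0 where "C0 = \<bar>\<rho> (x0,t0)\<bar>"
  define k1 where "k1 = energy + 1"
  define k2 where "k2 = (energy + 1) / (2*T)"
  have k: "0 < k1" "0 < k2" using energy_nonneg T_gt_1 by (auto simp: k1_def k2_def)
  define A where "A = C0 + sqrt (k1 * (T - -T))"
  define N where "N = max L0 (max x0 (max (2*A/\<eta>) (4*k2/\<eta>\<^sup>2)))"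
  have "\<exists>x\<in>{N<..<N+1}. (\<integral>\<^sup>+t. energy_dens (x,t) * indicator {-T<..<T} t \<partial>lborel) \<le> ennreal k1"
    by (rule exists_vertical_slice_nn_integral_le[OF energy_dens_measurable _
          nn_integral_energy_dens_le energy_nonneg]) (simp_all add: k1_def)
  then obtain L where L: "L \<in> {N<..<N+1}"
      "(\<integral>\<^sup>+t. energy_dens (L,t) * indicator {-T<..<T} t \<partial>lborel) \<le> ennreal k1"
    by blast
  have LN: "x0 < L" "L0 < L" "2*A/\<eta> < L" "4*k2/\<eta>\<^sup>2 < L" using L by (auto simp: N_def)
  have "energy < k2 * (T - -T)" using T_gt_1 by (simp add: k2_def field_simps)
  then have "\<exists>y\<in>{-T<..<T}. (\<integral>\<^sup>+x. energy_dens (x,y) * indicator {x0<..<L} x \<partial>lborel) \<le> ennreal k2"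
    by (intro exists_horizontal_slice_nn_integral_le[OF energy_dens_measurable _
          nn_integral_energy_dens_le energy_nonneg]) (use T_gt_1 in auto)
  then obtain y0 where y0: "y0 \<in> {-T<..<T}"
      "(\<integral>\<^sup>+x. energy_dens (x,y0) * indicator {x0<..<L} x \<partial>lborel) \<le> ennreal k2"
    by blast
  have vert: "\<bar>\<rho> (L,t) - \<rho> (L,y0)\<bar> \<le> sqrt (k1 * (T - -T))" if "t \<in> {-T..T}" for t
    by (rule vertical_oscillation_le[OF _ _ L(2)])
       (use that y0 k LN S_right D_right in \<open>auto simp: x0_def\<close>)
  have horiz: "\<bar>\<rho> (L,y0) - \<rho> (x0,y0)\<bar> \<le> sqrt (k2 * (L - x0))"
    by (rule horizontal_oscillation_le[OF _ _ y0(2)])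
       (use y0 k LN S_right D_right in \<open>auto simp: x0_def\<close>)
  have "sqrt (k2 * (L - x0)) \<le> sqrt ((\<eta> * L / 2)\<^sup>2)"
  proof (rule real_sqrt_le_mono)
    have L0: "0 < L" using LN(1) cx_gt_1 by (simp add: x0_def)
    have "4 * k2 < L * \<eta>\<^sup>2" using LN(4) \<eta> by (simp add: field_simps)
    then have "4 * k2 * L \<le> L * \<eta>\<^sup>2 * L" using L0 by (intro mult_right_mono) auto
    moreover have "k2 * (L - x0) \<le> k2 * L" using k(2) LN(1) cx_gt_1 by (simp add: x0_def)
    ultimately show "k2 * (L - x0) \<le> (\<eta> * L / 2)\<^sup>2" by (simp add: power2_eq_square field_simps)
  qed
  also have "\<dots> = \<eta> * L / 2" using \<eta> LN(1) cx_gt_1 by (simp add: x0_def)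
  finally have "sqrt (k2 * (L - x0)) \<le> \<eta> * L / 2" .
  moreover have "A \<le> \<eta> * L / 2" using LN(3) \<eta> by (simp add: field_simps)
  moreover have "\<bar>\<rho> (x0,y0)\<bar> \<le> C0" using t0 y0 by (simp add: C0_def)
  ultimately have "-\<eta> * L \<le> \<rho> (L,t)" if "t \<in> {-T..T}" for t
    using vert[OF that] horiz unfolding A_def by (simp add: abs_le_iff)
  then show ?thesis using LN(2) by blast
qed

end

section \<open>Nonnegativity\<close>

context half_strip_problem
begin

text \<open>The barrier \<alpha> + \<eta>1 x + \<eta>2 (y^2 - 2 x^2 + 2 L^2) has Laplacian -2\<eta>2 and is at least
  \<alpha> + \<eta>1 x on 0 \<le> x \<le> L; it is applied on the part of [0,L] \<times> [-T,T] outside the disk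
  and outside the two corners cut off along (almost-zero) segments of \<rho>.\<close>
lemma lower_bound_from_cuts:
  assumes p: "(px,py) \<in> D" and \<alpha>: "0 < \<alpha>" and \<eta>1: "0 < \<eta>1" and \<eta>2: "0 < \<eta>2"
    and sT: "0 < sT" "sT < \<epsilon>/2" and yT: "1 < yT" "yT < T"
    and sB: "0 < sB" "sB < \<epsilon>/2" and yB: "-T < yB" "yB < -1"
    and L: "px < L" "sT < L" "sB < L"
    and p_beyond_cuts: "sT \<le> px \<or> py \<le> yT" "sB \<le> px \<or> yB \<le> py"
    and cut_top: "\<And>t. t \<in> {0..sT} \<Longrightarrow> -\<alpha> \<le> \<rho> (t,yT)" "\<And>t. t \<in> {yT..T} \<Longrightarrow> -\<alpha> \<le> \<rho> (sT,t)"
    and cut_bot: "\<And>t. t \<in> {0..sB} \<Longrightarrow> -\<alpha> \<le> \<rho> (t,yB)" "\<And>t. t \<in> {-T..yB} \<Longrightarrow> -\<alpha> \<le> \<rho> (sB,t)"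
    and right: "\<And>t. t \<in> {-T..T} \<Longrightarrow> -\<alpha> - \<eta>1 * L \<le> \<rho> (L,t)"
  shows "-\<alpha> - \<eta>1 * px - \<eta>2 * (py\<^sup>2 - 2*px\<^sup>2 + 2*L\<^sup>2) \<le> \<rho> (px,py)"
proof -
  define K where "K = {q. 0 \<le> fst q \<and> fst q \<le> L \<and> -T \<le> snd q \<and> snd q \<le> T
      \<and> 1 \<le> (fst q - cx)\<^sup>2 + (snd q)\<^sup>2 \<and> (sT \<le> fst q \<or> snd q \<le> yT) \<and> (sB \<le> fst q \<or> yB \<le> snd q)}"
  define U where "U = {q. 0 < fst q \<and> fst q < L \<and> -T < snd q \<and> snd q < T
      \<and> 1 < (fst q - cx)\<^sup>2 + (snd q)\<^sup>2 \<and> (sT < fst q \<or> snd q < yT) \<and> (sB < fst q \<or> yB < snd q)}"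
  define G where "G = (\<lambda>q::real \<times> real. \<alpha> + \<eta>1 * fst q + \<eta>2 * ((snd q)\<^sup>2 - 2*(fst q)\<^sup>2 + 2*L\<^sup>2))"
  have Kmem: "(x,y) \<in> K \<longleftrightarrow> 0 \<le> x \<and> x \<le> L \<and> -T \<le> y \<and> y \<le> T \<and> 1 \<le> (x - cx)\<^sup>2 + y\<^sup>2
      \<and> (sT \<le> x \<or> y \<le> yT) \<and> (sB \<le> x \<or> yB \<le> y)" for x y
    by (simp add: K_def)
  have "closed K" unfolding K_def
    by (intro closed_Collect_conj closed_Collect_disj closed_Collect_le continuous_intros)
  moreover have "K \<subseteq> cbox (0,-T) (L,T)" by (auto simp: K_def cbox_Pair_iff)
  ultimately have compact: "compact K"
    using bounded_cbox bounded_subset compact_eq_bounded_closed by blast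
  have KS: "K \<subseteq> S"
  proof
    fix q assume "q \<in> K"
    moreover obtain x y where q: "q = (x,y)" by (cases q)
    ultimately have k: "0 \<le> x" "-T \<le> y" "y \<le> T" "1 \<le> (x - cx)\<^sup>2 + y\<^sup>2"
      "sT \<le> x \<or> y \<le> yT" "sB \<le> x \<or> yB \<le> y" by (auto simp: Kmem)
    then consider "x = 0" "-T < y" "y < T" | "(x - cx)\<^sup>2 + y\<^sup>2 = 1" | "(x,y) \<in> D" | "0 < x" "y = -T \<or> y = T"
      using sT sB yT yB by (fastforce simp: D_iff)
    then show "q \<in> S" using q D_subset_S by cases (auto simp: S_iff)
  qed
  have G_ge: "\<alpha> + \<eta>1 * x \<le> G (x,y)" if "0 \<le> x" "x \<le> L" for x y
  proof -
    have "x\<^sup>2 \<le> L\<^sup>2" using that by (simp add: power_mono)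
    then have "0 \<le> y\<^sup>2 - 2*x\<^sup>2 + 2*L\<^sup>2" using zero_le_power2[of y] by linarith
    then show ?thesis using \<eta>2 by (simp add: G_def)
  qed
  have "U \<subseteq> interior K"
  proof (rule interior_maximal)
    show "U \<subseteq> K" by (auto simp: U_def K_def)
    show "open U" unfolding U_def
      by (intro open_Collect_conj open_Collect_disj open_Collect_less continuous_intros)
  qed
  moreover have "U \<subseteq> D" by (auto simp: U_def D_iff)
  ultimately have U: "U \<subseteq> D \<inter> interior K" by blast
  have "\<forall>q\<in>K. 0 \<le> \<rho> q + G q"
  proof (rule barrier_nonneg[OF compact KS, where Gx = "\<lambda>q. \<eta>1 - 4*\<eta>2*fst q"
        and Gy = "\<lambda>q. 2*\<eta>2 * snd q" and Gxx = "\<lambda>q. -4*\<eta>2" and Gyy = "\<lambda>q. 2*\<eta>2"])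
    show "continuous_on K G" unfolding G_def by (intro continuous_intros)
    show "((\<lambda>t. G (t,y)) has_real_derivative \<eta>1 - 4*\<eta>2*fst (x,y)) (at x)" for x y
      unfolding G_def by (auto intro!: derivative_eq_intros)
    show "((\<lambda>t. G (x,t)) has_real_derivative 2*\<eta>2 * snd (x,y)) (at y)" for x y
      unfolding G_def by (auto intro!: derivative_eq_intros)
    show "((\<lambda>t. \<eta>1 - 4*\<eta>2*fst (t,y)) has_real_derivative -4*\<eta>2) (at x)" for x y
      by (auto intro!: derivative_eq_intros)
    show "((\<lambda>t. 2*\<eta>2 * snd (x,t)) has_real_derivative 2*\<eta>2) (at y)" for x y
      by (auto intro!: derivative_eq_intros)
    show "-4*\<eta>2 + 2*\<eta>2 < 0" using \<eta>2 by simp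
  next
    fix q assume qK: "q \<in> K" and neg: "\<rho> q + G q < 0"
    obtain x y where q: "q = (x,y)" by (cases q)
    have k: "0 \<le> x" "x \<le> L" "-T \<le> y" "y \<le> T" "1 \<le> (x - cx)\<^sup>2 + y\<^sup>2"
      "sT \<le> x \<or> y \<le> yT" "sB \<le> x \<or> yB \<le> y" using qK q by (auto simp: Kmem)
    have low: "\<rho> (x,y) < -\<alpha> - \<eta>1 * x" using neg q G_ge[OF k(1,2), of y] by simp
    moreover have "0 \<le> \<eta>1 * x" using \<eta>1 k(1) by simp
    ultimately have low': "\<rho> (x,y) < -\<alpha>" by linarith
    have "x \<noteq> 0"
    proof
      assume "x = 0"
      then have "-T < y" "y < T" using k sT sB yT yB by auto
      then show False using dirichlet_left low' \<alpha> \<open>x = 0\<close> by simp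
    qed
    moreover have "x \<noteq> L" using right[of y] low k(3,4) by auto
    moreover have "(x - cx)\<^sup>2 + y\<^sup>2 \<noteq> 1" using pos_on_circle[of x y] low' \<alpha> by auto
    moreover have "\<not> (x = sT \<and> yT \<le> y)" "\<not> (y = yT \<and> x \<le> sT)"
      using cut_top[of y] cut_top(1)[of x] low' k(1,4) by auto
    moreover have "\<not> (x = sB \<and> y \<le> yB)" "\<not> (y = yB \<and> x \<le> sB)"
      using cut_bot[of y] cut_bot(1)[of x] low' k(1,3) by auto
    ultimately have "-T < y \<Longrightarrow> y < T \<Longrightarrow> q \<in> U" using k q by (auto simp: U_def)
    then show "q \<in> D \<inter> interior K \<or> snd q = T \<or> snd q = -T" using U k q by force
  next
    fix x assume xK: "(x,T) \<in> K"
    then have x: "sT \<le> x" "x \<le> L" using yT by (auto simp: Kmem)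
    have "(x,t) \<in> K" if t: "1 < t" "t < T" for t
    proof -
      have "0 \<le> (x - cx)\<^sup>2" by simp
      then have "1 < (x - cx)\<^sup>2 + t\<^sup>2" using one_less_square[OF t(1)] by linarith
      then show ?thesis using t x sT yB by (auto simp: Kmem)
    qed
    then have "{x} \<times> {T - (T - 1)<..<T} \<subseteq> K" by auto
    then show "0 < x \<and> 0 < 2*\<eta>2 * snd (x,T) \<and> (\<exists>h>0. {x} \<times> {T-h<..<T} \<subseteq> K)"
      using x sT \<eta>2 T_gt_1 by (intro conjI exI[of _ "T - 1"]) auto
  next
    fix x assume xK: "(x,-T) \<in> K"
    then have x: "sB \<le> x" "x \<le> L" using yB by (auto simp: Kmem)
    have "(x,t) \<in> K" if t: "-T < t" "t < -1" for t
    proof -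
      have "1 < (-t)\<^sup>2" using t by (intro one_less_square) simp
      then have "1 < t\<^sup>2" by simp
      moreover have "0 \<le> (x - cx)\<^sup>2" by simp
      ultimately have "1 < (x - cx)\<^sup>2 + t\<^sup>2" by linarith
      then show ?thesis using t x sB yT by (auto simp: Kmem)
    qed
    then have "{x} \<times> {-T<..<-T + (T - 1)} \<subseteq> K" by auto
    then show "0 < x \<and> 2*\<eta>2 * snd (x,-T) < 0 \<and> (\<exists>h>0. {x} \<times> {-T<..<-T+h} \<subseteq> K)"
      using x sB \<eta>2 T_gt_1 by (intro conjI exI[of _ "T - 1"]) (auto simp: mult_pos_neg)
  qed
  moreover have "(px,py) \<in> K" using p p_beyond_cuts L by (auto simp: Kmem D_iff)
  ultimately have "0 \<le> \<rho> (px,py) + G (px,py)" by blast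
  then show ?thesis by (simp add: G_def algebra_simps)
qed

lemma nonneg_in_D:
  assumes "(px,py) \<in> D"
  shows "0 \<le> \<rho> (px,py)"
proof -
  have p: "0 < px" "-T < py" "py < T" using assms D_iff by auto
  have bound: "-\<alpha> - \<eta>1 * px \<le> \<rho> (px,py)" if \<alpha>: "0 < \<alpha>" and \<eta>1: "0 < \<eta>1" for \<alpha> \<eta>1
  proof -
    define w0 where "w0 = min px (min (\<epsilon>/4) (T - 1))"
    have "0 < w0" using p eps T_gt_1 by (simp add: w0_def)
    then obtain w where w: "0 < w" "w < w0"
      and small: "(\<integral>\<^sup>+q. energy_dens q * indicator ({0<..<w} \<times> UNIV) q \<partial>lborel) < ennreal ((\<alpha>/4)\<^sup>2)"
      using energy_near_left_small[of "(\<alpha>/4)\<^sup>2" w0] \<alpha> by auto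
    define \<tau> where "\<tau> = w/2"
    have \<tau>: "0 < \<tau>" "2*\<tau> < \<epsilon>/2" "2*\<tau> < px" "2*\<tau> < T - 1" and small': "(\<integral>\<^sup>+q. energy_dens q *
        indicator ({0<..<2*\<tau>} \<times> UNIV) q \<partial>lborel) < ennreal ((\<alpha>/4)\<^sup>2)"
      using w small by (auto simp: \<tau>_def w0_def)
    have "\<exists>s\<in>{\<tau><..<2*\<tau>}. \<exists>y\<in>{T-2*\<tau><..<T-2*\<tau>+\<tau>}.
        (\<forall>t\<in>{0..s}. -\<alpha> \<le> \<rho> (t,y)) \<and> (\<forall>t\<in>{T-2*\<tau>..T-2*\<tau>+2*\<tau>}. -\<alpha> \<le> \<rho> (s,t))"
      by (rule corner_cut[OF \<tau>(1,2) _ _ order_refl _ \<alpha> small']) (use \<tau> in auto)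
    then obtain s1 y1 where s1: "\<tau> < s1" "s1 < 2*\<tau>" and y1: "T - 2*\<tau> < y1" "y1 < T - \<tau>"
      and hor1: "\<forall>t\<in>{0..s1}. -\<alpha> \<le> \<rho> (t,y1)" and ver1: "\<forall>t\<in>{T-2*\<tau>..T}. -\<alpha> \<le> \<rho> (s1,t)"
      by auto
    have "\<exists>s\<in>{\<tau><..<2*\<tau>}. \<exists>y\<in>{-T+\<tau><..<-T+\<tau>+\<tau>}.
        (\<forall>t\<in>{0..s}. -\<alpha> \<le> \<rho> (t,y)) \<and> (\<forall>t\<in>{-T..-T+2*\<tau>}. -\<alpha> \<le> \<rho> (s,t))"
      by (rule corner_cut[OF \<tau>(1,2) order_refl _ _ _ \<alpha> small']) (use \<tau> in auto)
    then obtain s2 y2 where s2: "\<tau> < s2" "s2 < 2*\<tau>" and y2: "-T + \<tau> < y2" "y2 < -T + 2*\<tau>"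
      and hor2: "\<forall>t\<in>{0..s2}. -\<alpha> \<le> \<rho> (t,y2)" and ver2: "\<forall>t\<in>{-T..-T+2*\<tau>}. -\<alpha> \<le> \<rho> (s2,t)"
      by auto
    obtain L where L: "max px \<epsilon> < L" and right: "\<forall>t\<in>{-T..T}. -\<eta>1 * L \<le> \<rho> (L,t)"
      using far_right_lower_bound[OF \<eta>1] by blast
    have Q: "0 \<le> py\<^sup>2 - 2*px\<^sup>2 + 2*L\<^sup>2"
    proof -
      have "px\<^sup>2 \<le> L\<^sup>2" using L p by (simp add: power_mono)
      then show ?thesis using zero_le_power2[of py] by linarith
    qed
    have cut: "-\<alpha> - \<eta>1 * px - \<eta>2 * (py\<^sup>2 - 2*px\<^sup>2 + 2*L\<^sup>2) \<le> \<rho> (px,py)" if "0 < \<eta>2" for \<eta>2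
    proof (rule lower_bound_from_cuts[where sT=s1 and yT=y1 and sB=s2 and yB=y2 and L=L,
          OF assms \<alpha> \<eta>1 that])
      show "\<And>t. t \<in> {-T..T} \<Longrightarrow> -\<alpha> - \<eta>1 * L \<le> \<rho> (L,t)" using right \<alpha> by force
    qed (use s1 y1 s2 y2 \<tau> L hor1 ver1 hor2 ver2 in auto)
    have "-\<alpha> - \<eta>1 * px \<le> \<rho> (px,py) + e" if e: "0 < e" for e
    proof -
      have "e / (py\<^sup>2 - 2*px\<^sup>2 + 2*L\<^sup>2 + 1) * (py\<^sup>2 - 2*px\<^sup>2 + 2*L\<^sup>2) \<le> e"
        using Q e by (simp add: field_simps)
      moreover have "0 < e / (py\<^sup>2 - 2*px\<^sup>2 + 2*L\<^sup>2 + 1)" using Q e by simp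
      ultimately show ?thesis using cut by fastforce
    qed
    then show ?thesis by (rule field_le_epsilon)
  qed
  have "0 \<le> \<rho> (px,py) + e" if "0 < e" for e
    using bound[of "e/2" "e/(2*px)"] that p by simp
  then show ?thesis using field_le_epsilon[of 0 "\<rho> (px,py)"] by simp
qed

end

section \<open>Strict positivity\<close>

lemma has_real_derivative_inverse_sum_sq:
  fixes c b x :: real
  assumes "0 < (x - c)\<^sup>2 + b\<^sup>2"
  shows "((\<lambda>t. 1 / ((t - c)\<^sup>2 + b\<^sup>2)) has_real_derivative -2*(x-c)/((x-c)\<^sup>2 + b\<^sup>2)\<^sup>2) (at x)"
  using assms by (auto intro!: derivative_eq_intros simp: power2_eq_square field_simps)

lemma has_real_derivative_inverse_sum_sq_deriv:
  fixes c b x :: real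
  assumes pos: "0 < (x - c)\<^sup>2 + b\<^sup>2"
  shows "((\<lambda>t. -2*(t-c)/((t-c)\<^sup>2 + b\<^sup>2)\<^sup>2) has_real_derivative
           (6*(x-c)\<^sup>2 - 2*b\<^sup>2)/((x-c)\<^sup>2 + b\<^sup>2)^3) (at x)"
proof -
  define D where "D = (x-c)\<^sup>2 + b\<^sup>2"
  have f: "((\<lambda>t. -2*(t-c)) has_real_derivative -2) (at x)"
    by (auto intro!: derivative_eq_intros)
  have g: "((\<lambda>t. ((t-c)\<^sup>2 + b\<^sup>2)\<^sup>2) has_real_derivative 2*D*(2*(x-c))) (at x)"
    by (auto intro!: derivative_eq_intros simp: D_def)
  have "D\<^sup>2 \<noteq> 0" using pos unfolding D_def by (metis less_irrefl power_not_zero)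
  from DERIV_quotient[OF f g this[unfolded D_def]]
  have deriv: "((\<lambda>t. -2*(t-c)/((t-c)\<^sup>2 + b\<^sup>2)\<^sup>2) has_real_derivative
      (-2 * D\<^sup>2 - 2*D*(2*(x-c)) * (-2*(x-c))) / (D\<^sup>2)\<^sup>2) (at x)"
    by (simp add: D_def)
  have "-2 * D\<^sup>2 - 2*D*(2*(x-c)) * (-2*(x-c)) = D * (6*(x-c)\<^sup>2 - 2*b\<^sup>2)"
    by (simp add: D_def power2_eq_square algebra_simps)
  then have "(-2 * D\<^sup>2 - 2*D*(2*(x-c)) * (-2*(x-c))) / (D\<^sup>2)\<^sup>2 = (6*(x-c)\<^sup>2 - 2*b\<^sup>2)/D^3"
    using \<open>D\<^sup>2 \<noteq> 0\<close> by (simp add: power2_eq_square power3_eq_cube)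
  then show ?thesis using deriv by (simp add: D_def)
qed

lemma has_real_derivative_inverse_sum_sq':
  fixes c b x :: real
  assumes "0 < b\<^sup>2 + (x - c)\<^sup>2"
  shows "((\<lambda>t. 1 / (b\<^sup>2 + (t - c)\<^sup>2)) has_real_derivative -2*(x-c)/(b\<^sup>2 + (x-c)\<^sup>2)\<^sup>2) (at x)"
  using has_real_derivative_inverse_sum_sq[of x c b] assms by (simp add: add.commute)

lemma has_real_derivative_inverse_sum_sq_deriv':
  fixes c b x :: real
  assumes "0 < b\<^sup>2 + (x - c)\<^sup>2"
  shows "((\<lambda>t. -2*(t-c)/(b\<^sup>2 + (t-c)\<^sup>2)\<^sup>2) has_real_derivative
           (6*(x-c)\<^sup>2 - 2*b\<^sup>2)/(b\<^sup>2 + (x-c)\<^sup>2)^3) (at x)"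
  using has_real_derivative_inverse_sum_sq_deriv[of x c b] assms by (simp add: add.commute)

lemma laplacian_inverse_sum_sq_pos:
  fixes a b :: real
  assumes "0 < a\<^sup>2 + b\<^sup>2"
  shows "0 < (6*a\<^sup>2 - 2*b\<^sup>2)/(a\<^sup>2 + b\<^sup>2)^3 + (6*b\<^sup>2 - 2*a\<^sup>2)/(a\<^sup>2 + b\<^sup>2)^3"
proof -
  have "(6*a\<^sup>2 - 2*b\<^sup>2)/(a\<^sup>2 + b\<^sup>2)^3 + (6*b\<^sup>2 - 2*a\<^sup>2)/(a\<^sup>2 + b\<^sup>2)^3
      = ((6*a\<^sup>2 - 2*b\<^sup>2) + (6*b\<^sup>2 - 2*a\<^sup>2))/(a\<^sup>2 + b\<^sup>2)^3"
    by (rule add_divide_distrib[symmetric])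
  also have "\<dots> = 4 * (a\<^sup>2 + b\<^sup>2)/(a\<^sup>2 + b\<^sup>2)^3" by simp
  also have "0 < \<dots>" using assms by simp
  finally show ?thesis .
qed

lemma inverse_sq_barrier_derivs:
  fixes A a b c x y :: real
  assumes pos: "0 < (x - a)\<^sup>2 + (y - b)\<^sup>2"
  shows "((\<lambda>t. - (A * (1 / ((t - a)\<^sup>2 + (y - b)\<^sup>2) - c))) has_real_derivative
           - (A * (-2*(x - a)/((x - a)\<^sup>2 + (y - b)\<^sup>2)\<^sup>2))) (at x)"
    and "((\<lambda>t. - (A * (1 / ((x - a)\<^sup>2 + (t - b)\<^sup>2) - c))) has_real_derivative
           - (A * (-2*(y - b)/((x - a)\<^sup>2 + (y - b)\<^sup>2)\<^sup>2))) (at y)"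
    and "((\<lambda>t. - (A * (-2*(t - a)/((t - a)\<^sup>2 + (y - b)\<^sup>2)\<^sup>2))) has_real_derivative
           - (A * ((6*(x - a)\<^sup>2 - 2*(y - b)\<^sup>2)/((x - a)\<^sup>2 + (y - b)\<^sup>2)^3))) (at x)"
    and "((\<lambda>t. - (A * (-2*(t - b)/((x - a)\<^sup>2 + (t - b)\<^sup>2)\<^sup>2))) has_real_derivative
           - (A * ((6*(y - b)\<^sup>2 - 2*(x - a)\<^sup>2)/((x - a)\<^sup>2 + (y - b)\<^sup>2)^3))) (at y)"
proof -
  show "((\<lambda>t. - (A * (1 / ((t - a)\<^sup>2 + (y - b)\<^sup>2) - c))) has_real_derivative
      - (A * (-2*(x - a)/((x - a)\<^sup>2 + (y - b)\<^sup>2)\<^sup>2))) (at x)"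
    using DERIV_minus[OF DERIV_cmult[OF DERIV_diff[OF has_real_derivative_inverse_sum_sq[OF pos]
          DERIV_const[of c]]], of A] by simp
  show "((\<lambda>t. - (A * (1 / ((x - a)\<^sup>2 + (t - b)\<^sup>2) - c))) has_real_derivative
      - (A * (-2*(y - b)/((x - a)\<^sup>2 + (y - b)\<^sup>2)\<^sup>2))) (at y)"
    using DERIV_minus[OF DERIV_cmult[OF DERIV_diff[OF has_real_derivative_inverse_sum_sq'[OF pos]
          DERIV_const[of c]]], of A] by simp
  show "((\<lambda>t. - (A * (-2*(t - a)/((t - a)\<^sup>2 + (y - b)\<^sup>2)\<^sup>2))) has_real_derivative
      - (A * ((6*(x - a)\<^sup>2 - 2*(y - b)\<^sup>2)/((x - a)\<^sup>2 + (y - b)\<^sup>2)^3))) (at x)"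
    using pos by (intro DERIV_minus DERIV_cmult has_real_derivative_inverse_sum_sq_deriv)
  show "((\<lambda>t. - (A * (-2*(t - b)/((x - a)\<^sup>2 + (t - b)\<^sup>2)\<^sup>2))) has_real_derivative
      - (A * ((6*(y - b)\<^sup>2 - 2*(x - a)\<^sup>2)/((x - a)\<^sup>2 + (y - b)\<^sup>2)^3))) (at y)"
    using pos by (intro DERIV_minus DERIV_cmult has_real_derivative_inverse_sum_sq_deriv')
qed

lemma inverse_sq_barrier_deriv_sign:
  fixes A c Q :: real
  assumes "0 < A" "0 < Q"
  shows "0 < c \<Longrightarrow> 0 < - (A * (-2*c/Q))" and "c < 0 \<Longrightarrow> - (A * (-2*c/Q)) < 0"
proof -
  assume "0 < c"
  then have "-2*c/Q < 0" using assms(2) by (intro divide_neg_pos) auto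
  then have "A * (-2*c/Q) < 0" using assms(1) by (rule mult_pos_neg[rotated])
  then show "0 < - (A * (-2*c/Q))" by linarith
next
  assume "c < 0"
  then have "0 < -2*c/Q" using assms(2) by (intro divide_pos_pos) auto
  then have "0 < A * (-2*c/Q)" by (rule mult_pos_pos[OF assms(1)])
  then show "- (A * (-2*c/Q)) < 0" by linarith
qed

context half_strip_problem
begin

lemma wall_in_closure_D:
  assumes "0 < x" "y = T \<or> y = -T"
  shows "(x,y) \<in> closure D"
proof -
  have "(x,t) \<in> D" if "1 < \<bar>t\<bar>" "\<bar>t\<bar> < T" for t using D_beyond_1 assms(1) that by blast
  then have "{x} \<times> {1<..<T} \<subseteq> D" "{x} \<times> {-T<..<-1} \<subseteq> D" by auto
  then have "closure ({x} \<times> {1<..<T}) \<subseteq> closure D" "closure ({x} \<times> {-T<..<-1}) \<subseteq> closure D"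
    using closure_mono by blast+
  moreover have "closure ({x} \<times> {1<..<T}) = {x} \<times> {1..T}" "closure ({x} \<times> {-T<..<-1}) = {x} \<times> {-T..-1}"
    using T_gt_1 by (simp_all add: closure_Times)
  ultimately show ?thesis using assms(2) T_gt_1 by auto
qed

lemma nonneg_on_S:
  assumes "(x,y) \<in> S" "0 < x"
  shows "0 \<le> \<rho> (x,y)"
proof -
  consider "(x,y) \<in> D" | "(x - cx)\<^sup>2 + y\<^sup>2 = 1" | "y = T \<or> y = -T"
    using assms by (auto simp: S_iff)
  then show ?thesis
  proof cases
    case 1
    then show ?thesis by (rule nonneg_in_D)
  next
    case 2
    then show ?thesis using pos_on_circle[of x y] by simp
  next
    case 3
    have "\<rho> q \<in> {0..}" if "q \<in> D" for q
      using that nonneg_in_D[of "fst q" "snd q"] by simp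
    then have "\<rho> (x,y) \<in> {0..}"
      using assms(1) wall_in_closure_D[OF assms(2) 3] by (rule in_closed_on_closure[OF closed_atLeast])
    then show ?thesis by simp
  qed
qed

lemma pos_min_on_circle: "\<exists>m>0. \<forall>x y. (x - cx)\<^sup>2 + y\<^sup>2 = 1 \<longrightarrow> m \<le> \<rho> (x,y)"
proof -
  define C where "C = frontier (ball (cR0 \<epsilon>) (1::real))"
  have "compact C" "C \<noteq> {}" "C \<subseteq> S" by (simp_all add: C_def compact_frontier_bounded S_def)
  then obtain q where q: "q \<in> C" "\<forall>p\<in>C. \<rho> q \<le> \<rho> p"
    using continuous_attains_inf[of C \<rho>] continuous_on_subset[OF continuous_on_S] by blast
  have "0 < \<rho> q" using pos_circle q(1) by (simp add: C_def)
  moreover have "\<rho> q \<le> \<rho> (x,y)" if "(x - cx)\<^sup>2 + y\<^sup>2 = 1" for x y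
    using q(2) circle_iff[of x y] that by (simp add: C_def)
  ultimately show ?thesis by blast
qed

definition "annulus_part zx zy r0 R = {q. r0\<^sup>2 \<le> (fst q - zx)\<^sup>2 + (snd q - zy)\<^sup>2
    \<and> (fst q - zx)\<^sup>2 + (snd q - zy)\<^sup>2 \<le> R\<^sup>2 \<and> -T \<le> snd q \<and> snd q \<le> T
    \<and> 1 \<le> (fst q - cx)\<^sup>2 + (snd q)\<^sup>2}"

lemma annulus_part_pos_x:
  assumes "0 \<le> R" "R < zx" "(x,y) \<in> annulus_part zx zy r0 R"
  shows "0 < x"
proof (rule ccontr)
  assume "\<not> 0 < x"
  then have "R\<^sup>2 < (zx - x)\<^sup>2" using assms(1,2) by (intro power_strict_mono) auto
  moreover have "(zx - x)\<^sup>2 = (x - zx)\<^sup>2" by (rule power2_commute)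
  moreover have "0 \<le> (y - zy)\<^sup>2" by simp
  ultimately have "R\<^sup>2 < (x - zx)\<^sup>2 + (y - zy)\<^sup>2" by linarith
  then show False using assms(3) by (simp add: annulus_part_def)
qed

lemma compact_annulus_part:
  assumes "0 \<le> R"
  shows "compact (annulus_part zx zy r0 R)"
proof -
  have "closed (annulus_part zx zy r0 R)" unfolding annulus_part_def
    by (intro closed_Collect_conj closed_Collect_le continuous_intros)
  moreover have "annulus_part zx zy r0 R \<subseteq> cbox (zx - R, -T) (zx + R, T)"
  proof
    fix q assume qK: "q \<in> annulus_part zx zy r0 R"
    obtain x y where q: "q = (x,y)" by (cases q)
    have "(x - zx)\<^sup>2 + (y - zy)\<^sup>2 \<le> R\<^sup>2" "0 \<le> (y - zy)\<^sup>2"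
      using qK q by (simp_all add: annulus_part_def)
    then have "(x - zx)\<^sup>2 \<le> R\<^sup>2" by linarith
    then have "\<bar>x - zx\<bar> \<le> R" using assms abs_le_square_iff[of "x - zx" R] by simp
    then show "q \<in> cbox (zx - R, -T) (zx + R, T)"
      using qK q by (auto simp: annulus_part_def cbox_Pair_iff)
  qed
  ultimately show ?thesis
    using bounded_cbox bounded_subset compact_eq_bounded_closed by blast
qed

lemma annulus_part_subset_S:
  assumes "0 \<le> R" "R < zx"
  shows "annulus_part zx zy r0 R \<subseteq> S"
proof
  fix q assume qK: "q \<in> annulus_part zx zy r0 R"
  obtain x y where q: "q = (x,y)" by (cases q)
  then have "0 < x" "-T \<le> y" "y \<le> T" "1 \<le> (x - cx)\<^sup>2 + y\<^sup>2"
    using qK annulus_part_pos_x[OF assms, of x y] by (auto simp: annulus_part_def)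
  then show "q \<in> S" using q by (cases "y = T \<or> y = -T") (auto simp: S_iff D_iff)
qed

text \<open>A Hopf-type comparison on an annulus around z: if \<rho> \<ge> m > 0 on the inner circle and on
  the circle bounding the disk, then \<rho> exceeds the barrier A (1/|q - z|^2 - 1/R^2), which
  equals m on the inner circle, vanishes on the outer one and is superharmonic in between.\<close>
lemma pos_in_annulus:
  fixes zx zy r0 R m px py :: real
  assumes z: "(zx,zy) \<in> D" and r: "0 < r0" "r0 < R" "R < zx" and m: "0 < m"
    and inner: "\<And>x y. (x - zx)\<^sup>2 + (y - zy)\<^sup>2 = r0\<^sup>2 \<Longrightarrow> m \<le> \<rho> (x,y)"
    and circle: "\<And>x y. (x - cx)\<^sup>2 + y\<^sup>2 = 1 \<Longrightarrow> m \<le> \<rho> (x,y)"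
    and p: "(px,py) \<in> D" "r0\<^sup>2 < (px - zx)\<^sup>2 + (py - zy)\<^sup>2" "(px - zx)\<^sup>2 + (py - zy)\<^sup>2 < R\<^sup>2"
  shows "0 < \<rho> (px,py)"
proof -
  have zy: "-T < zy" "zy < T" using z D_iff by auto
  define d2 where "d2 = (\<lambda>q::real \<times> real. (fst q - zx)\<^sup>2 + (snd q - zy)\<^sup>2)"
  have d2: "d2 (x,y) = (x - zx)\<^sup>2 + (y - zy)\<^sup>2" for x y by (simp add: d2_def)
  have r2: "0 < r0\<^sup>2" "r0\<^sup>2 < R\<^sup>2" using r by (simp, intro power_strict_mono) auto
  have "0 < R" using r by linarith
  then have "0 < R\<^sup>2 * r0\<^sup>2" using r(1) by simp
  then have "1/R\<^sup>2 < 1/r0\<^sup>2" using r2 by (intro divide_strict_left_mono) auto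
  define X where "X = 1/r0\<^sup>2 - 1/R\<^sup>2"
  have X: "0 < X" using \<open>1/R\<^sup>2 < 1/r0\<^sup>2\<close> by (simp add: X_def)
  define A where "A = m / X"
  have "0 < A" "A * X = m" using m X by (simp_all add: A_def)
  then have A: "0 < A" "A * (1/r0\<^sup>2 - 1/R\<^sup>2) = m" by (simp_all add: X_def)
  define G where "G = (\<lambda>q. - (A * (1 / d2 q - 1/R\<^sup>2)))"
  define K where "K = annulus_part zx zy r0 R"
  have Kmem: "(x,y) \<in> K \<longleftrightarrow> r0\<^sup>2 \<le> d2 (x,y) \<and> d2 (x,y) \<le> R\<^sup>2 \<and> -T \<le> y \<and> y \<le> T
      \<and> 1 \<le> (x - cx)\<^sup>2 + y\<^sup>2" for x y
    by (simp add: K_def annulus_part_def d2)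
  have K_pos: "0 < d2 q" if "q \<in> K" for q
  proof -
    have "r0\<^sup>2 \<le> d2 q" using that by (cases q) (simp add: Kmem)
    then show ?thesis using r2 by linarith
  qed
  have "0 \<le> R" using r by linarith
  then have K_right: "0 < x" if "(x,y) \<in> K" for x y
    using annulus_part_pos_x r(3) that by (simp add: K_def)
  have compact: "compact K" using compact_annulus_part \<open>0 \<le> R\<close> by (simp add: K_def)
  have KS: "K \<subseteq> S" using annulus_part_subset_S \<open>0 \<le> R\<close> r(3) by (simp add: K_def)
  have strict: "r0\<^sup>2 < d2 q \<and> d2 q < R\<^sup>2 \<and> (fst q - cx)\<^sup>2 + (snd q)\<^sup>2 \<noteq> 1"
    if qK: "q \<in> K" and neg: "\<rho> q + G q < 0" for q
  proof -
    obtain x y where q: "q = (x,y)" by (cases q)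
    have w_le: "A * (1 / d2 q - 1/R\<^sup>2) \<le> m"
    proof -
      have "r0\<^sup>2 \<le> d2 q" using qK by (cases q) (simp add: Kmem)
      then have "1 / d2 q \<le> 1/r0\<^sup>2"
        using mult_pos_pos[OF r2(1) K_pos[OF qK]] by (intro divide_left_mono) (auto simp: mult.commute)
      then have "A * (1 / d2 q - 1/R\<^sup>2) \<le> A * (1/r0\<^sup>2 - 1/R\<^sup>2)"
        using A(1) by (intro mult_left_mono) auto
      then show ?thesis using A(2) by simp
    qed
    have "d2 q \<noteq> r0\<^sup>2"
    proof
      assume "d2 q = r0\<^sup>2"
      then have "m \<le> \<rho> q" "G q = - m" using inner[of x y] A(2) q by (simp_all add: G_def d2)
      then show False using neg by simp
    qed
    moreover have "d2 q \<noteq> R\<^sup>2"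
    proof
      assume "d2 q = R\<^sup>2"
      moreover have "0 \<le> \<rho> q" using nonneg_on_S[of x y] KS qK K_right[of x y] q by auto
      ultimately show False using neg r2 by (simp add: G_def)
    qed
    moreover have "(x - cx)\<^sup>2 + y\<^sup>2 \<noteq> 1"
    proof
      assume "(x - cx)\<^sup>2 + y\<^sup>2 = 1"
      then have "m \<le> \<rho> q" using circle q by simp
      then show False using w_le neg by (simp add: G_def)
    qed
    ultimately show ?thesis using qK q by (auto simp: Kmem)
  qed
  define U where "U = {q. r0\<^sup>2 < d2 q \<and> d2 q < R\<^sup>2 \<and> -T < snd q \<and> snd q < T
      \<and> 1 < (fst q - cx)\<^sup>2 + (snd q)\<^sup>2}"
  have "U \<subseteq> interior K"
  proof (rule interior_maximal)
    show "U \<subseteq> K" by (auto simp: U_def K_def annulus_part_def d2_def)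
    show "open U" unfolding U_def d2_def
      by (intro open_Collect_conj open_Collect_less continuous_intros)
  qed
  moreover have "U \<subseteq> D"
  proof
    fix q assume "q \<in> U"
    moreover from this have "q \<in> K" using \<open>U \<subseteq> interior K\<close> interior_subset by blast
    ultimately show "q \<in> D" using K_right by (cases q) (auto simp: U_def D_iff)
  qed
  ultimately have U: "U \<subseteq> D \<inter> interior K" by blast
  have vertical_room: "\<exists>h>0. \<forall>t. \<bar>t - y\<bar> < h \<longrightarrow> r0\<^sup>2 < d2 (x,t) \<and> d2 (x,t) < R\<^sup>2"
    if "r0\<^sup>2 < d2 (x,y)" "d2 (x,y) < R\<^sup>2" for x y
  proof -
    have "open {t. r0\<^sup>2 < d2 (x,t) \<and> d2 (x,t) < R\<^sup>2}"
      unfolding d2 by (intro open_Collect_conj open_Collect_less continuous_intros)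
    moreover have "y \<in> {t. r0\<^sup>2 < d2 (x,t) \<and> d2 (x,t) < R\<^sup>2}" using that by simp
    ultimately show ?thesis unfolding open_real by blast
  qed
  have "\<forall>q\<in>K. 0 \<le> \<rho> q + G q"
  proof (rule barrier_nonneg[OF compact KS,
        where Gx = "\<lambda>q. - (A * (-2*(fst q - zx)/((fst q - zx)\<^sup>2 + (snd q - zy)\<^sup>2)\<^sup>2))"
          and Gy = "\<lambda>q. - (A * (-2*(snd q - zy)/((fst q - zx)\<^sup>2 + (snd q - zy)\<^sup>2)\<^sup>2))"
          and Gxx = "\<lambda>q. - (A * ((6*(fst q - zx)\<^sup>2 - 2*(snd q - zy)\<^sup>2)/((fst q - zx)\<^sup>2 + (snd q - zy)\<^sup>2)^3))"
          and Gyy = "\<lambda>q. - (A * ((6*(snd q - zy)\<^sup>2 - 2*(fst q - zx)\<^sup>2)/((fst q - zx)\<^sup>2 + (snd q - zy)\<^sup>2)^3))"])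
    have "continuous_on K d2" unfolding d2_def by (intro continuous_intros)
    then show "continuous_on K G"
      unfolding G_def by (intro continuous_intros) (auto dest!: K_pos)
    fix x y
    assume "(x,y) \<in> K"
    then have pos: "0 < (x - zx)\<^sup>2 + (y - zy)\<^sup>2" using K_pos[of "(x,y)"] by (simp add: d2)
    show "((\<lambda>t. G (t,y)) has_real_derivative
        - (A * (-2*(fst (x,y) - zx)/((fst (x,y) - zx)\<^sup>2 + (snd (x,y) - zy)\<^sup>2)\<^sup>2))) (at x)"
      using inverse_sq_barrier_derivs(1)[OF pos, of A "1/R\<^sup>2"] by (simp add: G_def d2_def)
    show "((\<lambda>t. G (x,t)) has_real_derivative
        - (A * (-2*(snd (x,y) - zy)/((fst (x,y) - zx)\<^sup>2 + (snd (x,y) - zy)\<^sup>2)\<^sup>2))) (at y)"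
      using inverse_sq_barrier_derivs(2)[OF pos, of A "1/R\<^sup>2"] by (simp add: G_def d2_def)
  next
    fix x y
    assume "(x,y) \<in> D \<inter> interior K"
    then have pos: "0 < (x - zx)\<^sup>2 + (y - zy)\<^sup>2" using K_pos interior_subset by (force simp: d2)
    show "((\<lambda>t. - (A * (-2*(fst (t,y) - zx)/((fst (t,y) - zx)\<^sup>2 + (snd (t,y) - zy)\<^sup>2)\<^sup>2))) has_real_derivative
        - (A * ((6*(fst (x,y) - zx)\<^sup>2 - 2*(snd (x,y) - zy)\<^sup>2)/((fst (x,y) - zx)\<^sup>2 + (snd (x,y) - zy)\<^sup>2)^3))) (at x)"
      using inverse_sq_barrier_derivs(3)[OF pos, of A] by simp
  next
    fix x y
    assume "(x,y) \<in> D \<inter> interior K"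
    then have pos: "0 < (x - zx)\<^sup>2 + (y - zy)\<^sup>2" using K_pos interior_subset by (force simp: d2)
    show "((\<lambda>t. - (A * (-2*(snd (x,t) - zy)/((fst (x,t) - zx)\<^sup>2 + (snd (x,t) - zy)\<^sup>2)\<^sup>2))) has_real_derivative
        - (A * ((6*(snd (x,y) - zy)\<^sup>2 - 2*(fst (x,y) - zx)\<^sup>2)/((fst (x,y) - zx)\<^sup>2 + (snd (x,y) - zy)\<^sup>2)^3))) (at y)"
      using inverse_sq_barrier_derivs(4)[OF pos, of A] by simp
  next
    fix q assume "q \<in> D \<inter> interior K"
    then have pos: "0 < d2 q" using K_pos interior_subset by blast
    from mult_pos_pos[OF A(1) laplacian_inverse_sum_sq_pos[OF pos[unfolded d2_def]]]
    show "- (A * ((6*(fst q - zx)\<^sup>2 - 2*(snd q - zy)\<^sup>2)/((fst q - zx)\<^sup>2 + (snd q - zy)\<^sup>2)^3))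
        + - (A * ((6*(snd q - zy)\<^sup>2 - 2*(fst q - zx)\<^sup>2)/((fst q - zx)\<^sup>2 + (snd q - zy)\<^sup>2)^3)) < 0"
      by (simp only: distrib_left)
  next
    fix q assume qK: "q \<in> K" and neg: "\<rho> q + G q < 0"
    obtain x y where q: "q = (x,y)" by (cases q)
    have "-T \<le> y" "y \<le> T" using qK q by (simp_all add: Kmem)
    moreover have "q \<in> U" if "-T < y" "y < T"
      using strict[OF qK neg] qK q that by (auto simp: U_def Kmem)
    ultimately show "q \<in> D \<inter> interior K \<or> snd q = T \<or> snd q = -T"
      using U q by fastforce
  next
    fix x assume xK: "(x,T) \<in> K" and neg: "\<rho> (x,T) + G (x,T) < 0"
    obtain h where h: "0 < h" "\<And>t. \<bar>t - T\<bar> < h \<Longrightarrow> r0\<^sup>2 < d2 (x,t) \<and> d2 (x,t) < R\<^sup>2"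
      using vertical_room[of x T] strict[OF xK neg] by auto
    have room: "(x,t) \<in> K" if "t \<in> {T - min h (T-1)<..<T}" for t
    proof -
      have "1 < t" "0 \<le> (x - cx)\<^sup>2" using that by auto
      then have "1 < (x - cx)\<^sup>2 + t\<^sup>2" using one_less_square[of t] by linarith
      moreover have "\<bar>t - T\<bar> < h" using that by auto
      ultimately show ?thesis using that h(2)[of t] by (auto simp: Kmem)
    qed
    have "0 < ((x - zx)\<^sup>2 + (T - zy)\<^sup>2)\<^sup>2"
      by (rule zero_less_power) (use K_pos[OF xK] in \<open>simp add: d2\<close>)
    then have "0 < - (A * (-2*(snd (x,T) - zy)/((fst (x,T) - zx)\<^sup>2 + (snd (x,T) - zy)\<^sup>2)\<^sup>2))"
      unfolding fst_conv snd_conv using zy by (intro inverse_sq_barrier_deriv_sign(1)[OF A(1)]) auto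
    moreover have "0 < min h (T-1)" "{x} \<times> {T - min h (T-1)<..<T} \<subseteq> K"
      using h(1) T_gt_1 room by auto
    ultimately show "0 < x \<and> 0 < - (A * (-2*(snd (x,T) - zy)/((fst (x,T) - zx)\<^sup>2 + (snd (x,T) - zy)\<^sup>2)\<^sup>2))
        \<and> (\<exists>h>0. {x} \<times> {T-h<..<T} \<subseteq> K)"
      using K_right[OF xK] by blast
  next
    fix x assume xK: "(x,-T) \<in> K" and neg: "\<rho> (x,-T) + G (x,-T) < 0"
    obtain h where h: "0 < h" "\<And>t. \<bar>t - -T\<bar> < h \<Longrightarrow> r0\<^sup>2 < d2 (x,t) \<and> d2 (x,t) < R\<^sup>2"
      using vertical_room[of x "-T"] strict[OF xK neg] by auto
    have room: "(x,t) \<in> K" if "t \<in> {-T<..<-T + min h (T-1)}" for t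
    proof -
      have "1 < -t" using that by auto
      then have "1 < t\<^sup>2" using one_less_square[of "-t"] by simp
      moreover have "0 \<le> (x - cx)\<^sup>2" by simp
      ultimately have "1 < (x - cx)\<^sup>2 + t\<^sup>2" by linarith
      moreover have "\<bar>t - -T\<bar> < h" using that by auto
      ultimately show ?thesis using that h(2)[of t] by (auto simp: Kmem)
    qed
    have "0 < ((x - zx)\<^sup>2 + (-T - zy)\<^sup>2)\<^sup>2"
      by (rule zero_less_power) (use K_pos[OF xK] in \<open>simp add: d2\<close>)
    then have "- (A * (-2*(snd (x,-T) - zy)/((fst (x,-T) - zx)\<^sup>2 + (snd (x,-T) - zy)\<^sup>2)\<^sup>2)) < 0"
      unfolding fst_conv snd_conv using zy by (intro inverse_sq_barrier_deriv_sign(2)[OF A(1)]) auto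
    moreover have "0 < min h (T-1)" "{x} \<times> {-T<..<-T + min h (T-1)} \<subseteq> K"
      using h(1) T_gt_1 room by auto
    ultimately show "0 < x \<and> - (A * (-2*(snd (x,-T) - zy)/((fst (x,-T) - zx)\<^sup>2 + (snd (x,-T) - zy)\<^sup>2)\<^sup>2)) < 0
        \<and> (\<exists>h>0. {x} \<times> {-T<..<-T+h} \<subseteq> K)"
      using K_right[OF xK] by blast
  qed
  moreover have pK: "(px,py) \<in> K"
  proof -
    have "-T < py" "py < T" "1 < (px - cx)\<^sup>2 + py\<^sup>2" using p(1) by (simp_all add: D_iff)
    then show ?thesis using p(2,3) by (simp add: Kmem d2)
  qed
  ultimately have "0 \<le> \<rho> (px,py) + G (px,py)" by blast
  moreover have "1/R\<^sup>2 < 1 / d2 (px,py)"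
    using p K_pos[OF pK] by (intro frac_less2) (simp_all add: d2)
  then have "0 < A * (1 / d2 (px,py) - 1/R\<^sup>2)" using A(1) by (intro mult_pos_pos) simp_all
  then have "G (px,py) < 0" by (simp add: G_def)
  ultimately show ?thesis by linarith
qed

end

context half_strip_problem
begin

lemma zero_on_small_circle:
  assumes p: "p \<in> D" "\<rho> p = 0" and d: "0 < d" "ball p (3*d) \<subseteq> D" "4*d \<le> fst p"
    and z: "dist z p < d" and r: "0 < r" "r < dist z p"
  shows "\<exists>\<zeta>. dist \<zeta> z = r \<and> \<rho> \<zeta> = 0"
proof (rule ccontr)
  assume no_zero: "\<nexists>\<zeta>. dist \<zeta> z = r \<and> \<rho> \<zeta> = 0"
  have sphere_D: "sphere z r \<subseteq> D"
  proof
    fix \<zeta> assume "\<zeta> \<in> sphere z r"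
    then have "dist p \<zeta> < 3*d" using dist_triangle[of p \<zeta> z] z r d(1) by (simp add: dist_commute)
    then show "\<zeta> \<in> D" using d(2) by auto
  qed
  have pos: "0 < \<rho> \<zeta>" if "\<zeta> \<in> sphere z r" for \<zeta>
  proof -
    have "0 \<le> \<rho> \<zeta>" using nonneg_in_D[of "fst \<zeta>" "snd \<zeta>"] sphere_D that by auto
    moreover have "dist \<zeta> z = r" using that by (simp add: dist_commute)
    then have "\<rho> \<zeta> \<noteq> 0" using no_zero by blast
    ultimately show ?thesis by simp
  qed
  have "continuous_on (sphere z r) \<rho>"
    using continuous_on_subset[OF continuous_on_S] sphere_D D_subset_S by blast
  moreover have "sphere z r \<noteq> {}" using r by simp
  ultimately obtain q where q: "q \<in> sphere z r" "\<forall>\<zeta>\<in>sphere z r. \<rho> q \<le> \<rho> \<zeta>"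
    using continuous_attains_inf[OF compact_sphere] by blast
  obtain m2 where m2: "0 < m2" "\<forall>x y. (x - cx)\<^sup>2 + y\<^sup>2 = 1 \<longrightarrow> m2 \<le> \<rho> (x,y)"
    using pos_min_on_circle by blast
  obtain zx zy px py where zp: "z = (zx,zy)" "p = (px,py)" by (cases z, cases p)
  have "dist z p < 3*d" using z d(1) by simp
  then have zD: "(zx,zy) \<in> D" using d(2) zp by (auto simp: dist_commute)
  have "\<bar>px - zx\<bar> \<le> dist z p" using dist_fst_le[of z p] zp by (simp add: dist_real_def)
  then have zx: "2*d < zx" using z d zp by simp
  have "0 < \<rho> (px,py)"
  proof (rule pos_in_annulus[OF zD r(1) _ zx, where m = "min (\<rho> q) m2"])
    show "r < 2*d" using r z by simp
    show "0 < min (\<rho> q) m2" using pos[OF q(1)] m2(1) by simp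
    show "min (\<rho> q) m2 \<le> \<rho> (x,y)" if "(x - zx)\<^sup>2 + (y - zy)\<^sup>2 = r\<^sup>2" for x y
    proof -
      have "(dist (x,y) z)\<^sup>2 = r\<^sup>2" using that zp by (simp add: dist_sq_Pair)
      then have "(x,y) \<in> sphere z r" using r by (simp add: dist_commute power2_eq_iff_nonneg)
      then show ?thesis using q(2) by force
    qed
    show "min (\<rho> q) m2 \<le> \<rho> (x,y)" if "(x - cx)\<^sup>2 + y\<^sup>2 = 1" for x y
      using m2(2) that by force
    show "(px,py) \<in> D" using p(1) zp by simp
    have "(px - zx)\<^sup>2 + (py - zy)\<^sup>2 = (dist z p)\<^sup>2" using zp by (simp add: dist_sq_Pair dist_commute)
    moreover have "r\<^sup>2 < (dist z p)\<^sup>2" by (rule power_strict_mono) (use r in auto)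
    moreover have "(dist z p)\<^sup>2 < (2*d)\<^sup>2" by (rule power_strict_mono) (use z d(1) in auto)
    ultimately show "r\<^sup>2 < (px - zx)\<^sup>2 + (py - zy)\<^sup>2" "(px - zx)\<^sup>2 + (py - zy)\<^sup>2 < (2*d)\<^sup>2"
      by simp_all
  qed
  then show False using p(2) zp by simp
qed

text \<open>Near a zero p, a nonzero value at z would by continuity persist on small circles around z.\<close>
lemma open_zero_set: "open {p \<in> D. \<rho> p = 0}"
proof (unfold open_contains_ball, intro ballI)
  fix p assume "p \<in> {p \<in> D. \<rho> p = 0}"
  then have p: "p \<in> D" "\<rho> p = 0" by simp_all
  obtain e where e: "0 < e" "ball p e \<subseteq> D" using p(1) open_D open_contains_ball by blast
  define d where "d = min (e/3) (fst p / 4)"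
  have "0 < fst p" using p(1) D_iff[of "fst p" "snd p"] by simp
  then have d: "0 < d" "ball p (3*d) \<subseteq> D" "4*d \<le> fst p"
    using e by (auto simp: d_def)
  have "z \<in> {p \<in> D. \<rho> p = 0}" if z: "z \<in> ball p d" for z
  proof (rule ccontr)
    have zD: "z \<in> D" using z d by auto
    assume "z \<notin> {p \<in> D. \<rho> p = 0}"
    then have "\<rho> z \<noteq> 0" using zD by simp
    moreover have "continuous (at z) \<rho>"
      using continuous_on_subset[OF continuous_on_S D_subset_S] open_D zD
      by (simp add: continuous_on_eq_continuous_at)
    ultimately obtain s where s: "0 < s" "\<And>y. dist z y < s \<Longrightarrow> \<rho> y \<noteq> 0"
      using continuous_at_avoid by blast
    have "z \<noteq> p" using \<open>\<rho> z \<noteq> 0\<close> p(2) by auto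
    define r where "r = min (s/2) (dist z p / 2)"
    have "dist z p < d" using z by (simp add: dist_commute)
    moreover have "0 < r" "r < dist z p"
    proof -
      have "0 < dist z p" using \<open>z \<noteq> p\<close> by simp
      moreover have "r \<le> dist z p / 2" by (simp add: r_def)
      ultimately show "r < dist z p" by linarith
      show "0 < r" using s(1) \<open>0 < dist z p\<close> by (simp add: r_def)
    qed
    ultimately obtain \<zeta> where "dist \<zeta> z = r" "\<rho> \<zeta> = 0"
      using zero_on_small_circle[OF p d] by blast
    moreover have "r < s" using s(1) by (simp add: r_def)
    ultimately show False using s(2)[of \<zeta>] by (simp add: dist_commute)
  qed
  then show "\<exists>e>0. ball p e \<subseteq> {p \<in> D. \<rho> p = 0}" using d(1) by blast
qed

lemma connected_D_upper: "connected (D \<inter> {q. 0 \<le> snd q})"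
proof -
  define ym where "ym = (1 + T)/2"
  have ym: "1 < ym" "ym < T" using T_gt_1 by (simp_all add: ym_def)
  define A where "A = {0<..<\<epsilon>/2} \<times> {0..<T} \<union> {0<..} \<times> {1<..<T}"
  have "connected A" unfolding A_def
  proof (rule connected_Un)
    show "({0<..<\<epsilon>/2} \<times> {0..<T}) \<inter> ({0<..} \<times> {1<..<T}) \<noteq> {}"
      using eps ym by (intro ex_in_conv[THEN iffD1] exI[of _ "(\<epsilon>/4, ym)"]) auto
  qed (auto intro!: convex_connected convex_Times)
  have A_sub: "A \<subseteq> D \<inter> {q. 0 \<le> snd q}"
    using T_gt_1 by (auto simp: A_def intro: D_near_left D_beyond_1)
  define C where "C = (\<lambda>p::real \<times> real. {fst p} \<times> {min (snd p) ym..max (snd p) ym} \<union> A)"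
  have C: "p \<in> C p \<and> C p \<subseteq> D \<inter> {q. 0 \<le> snd q} \<and> (\<epsilon>/4, ym) \<in> C p \<and> connected (C p)"
    if "p \<in> D \<inter> {q. 0 \<le> snd q}" for p
  proof -
    obtain x y where p0: "p = (x,y)" by (cases p)
    then have p: "p = (x,y)" "(x,y) \<in> D" "0 \<le> y" using that by auto
    have xy: "0 < x" "y < T" using p(2) by (simp_all add: D_iff)
    have "(x,t) \<in> D" if "t \<in> {min y ym..max y ym}" for t
    proof (cases "y \<le> t")
      case True
      then show ?thesis by (rule D_upwards[OF p(2,3)]) (use that xy ym in auto)
    next
      case False
      then show ?thesis using that xy ym by (intro D_beyond_1) auto
    qed
    then have seg: "{x} \<times> {min y ym..max y ym} \<subseteq> D \<inter> {q. 0 \<le> snd q}" using p(3) ym by auto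
    have "connected ({x} \<times> {min y ym..max y ym} \<union> A)"
    proof (rule connected_Un)
      show "({x} \<times> {min y ym..max y ym}) \<inter> A \<noteq> {}"
        using xy ym by (intro ex_in_conv[THEN iffD1] exI[of _ "(x, ym)"]) (auto simp: A_def)
    qed (auto intro!: convex_connected convex_Times \<open>connected A\<close>)
    moreover have "(\<epsilon>/4, ym) \<in> A" using eps ym by (simp add: A_def)
    ultimately show ?thesis using seg A_sub p by (auto simp: C_def)
  qed
  have "D \<inter> {q. 0 \<le> snd q} = \<Union>(C ` (D \<inter> {q. 0 \<le> snd q}))" using C by blast
  moreover have "connected (\<Union>(C ` (D \<inter> {q. 0 \<le> snd q})))"
    by (rule connected_Union) (use C in blast)+
  ultimately show ?thesis by simp
qed

lemma connected_D: "connected D"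
proof -
  define U where "U = D \<inter> {q. 0 \<le> snd q}"
  define \<sigma> where "\<sigma> = (\<lambda>q::real \<times> real. (fst q, - snd q))"
  have \<sigma>U: "\<sigma> ` U = D \<inter> {q. snd q \<le> 0}"
  proof
    show "\<sigma> ` U \<subseteq> D \<inter> {q. snd q \<le> 0}"
      using D_reflect by (auto simp: U_def \<sigma>_def)
    show "D \<inter> {q. snd q \<le> 0} \<subseteq> \<sigma> ` U"
    proof
      fix q assume "q \<in> D \<inter> {q. snd q \<le> 0}"
      then have "\<sigma> q \<in> U" "q = \<sigma> (\<sigma> q)" using D_reflect[of "fst q" "snd q"] by (auto simp: U_def \<sigma>_def)
      then show "q \<in> \<sigma> ` U" by blast
    qed
  qed
  have "connected U" using connected_D_upper by (simp add: U_def)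
  moreover have "connected (\<sigma> ` U)"
    using \<open>connected U\<close> unfolding \<sigma>_def by (intro connected_continuous_image continuous_intros)
  moreover have "(\<epsilon>/4, 0) \<in> U \<inter> \<sigma> ` U"
    using eps T_gt_1 D_near_left[of "\<epsilon>/4" 0] unfolding \<sigma>U by (simp add: U_def)
  ultimately have "connected (U \<union> \<sigma> ` U)" by (intro connected_Un) auto
  moreover have "D = U \<union> \<sigma> ` U" using \<sigma>U by (auto simp: U_def)
  ultimately show ?thesis by simp
qed

lemma pos_in_D:
  assumes "q \<in> D"
  shows "0 < \<rho> q"
proof -
  define Z where "Z = {p \<in> D. \<rho> p = 0}"
  have "openin (top_of_set D) Z"
    unfolding openin_open using open_zero_set by (intro exI[of _ Z]) (auto simp: Z_def)
  moreover have "closedin (top_of_set D) Z" unfolding Z_def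
    by (rule continuous_closedin_preimage_constant[OF continuous_on_subset[OF continuous_on_S D_subset_S]])
  ultimately have "Z = {} \<or> Z = D" using connected_D by (simp add: connected_clopen)
  moreover have "Z \<noteq> D"
  proof
    assume "Z = D"
    then have zero: "\<rho> p \<in> {0}" if "p \<in> D" for p using that by (auto simp: Z_def)
    have "{cx+1<..<cx+2} \<times> {0} \<subseteq> D" using T_gt_1 D_right by auto
    then have "closure ({cx+1<..<cx+2} \<times> {0}) \<subseteq> closure D" by (rule closure_mono)
    then have "(cx+1, 0) \<in> closure D" by (auto simp: closure_Times)
    moreover have "(cx+1, 0) \<in> S" by (simp add: S_iff)
    ultimately have "\<rho> (cx+1, 0) \<in> {0}" using in_closed_on_closure[OF closed_singleton zero] by blast
    then show False using pos_on_circle[of "cx+1" 0] by simp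
  qed
  ultimately have "Z = {}" by blast
  then have "\<rho> q \<noteq> 0" using assms unfolding Z_def by blast
  moreover have "0 \<le> \<rho> q" using nonneg_in_D[of "fst q" "snd q"] assms by simp
  ultimately show ?thesis by simp
qed

end

theorem lemma2p7:
  fixes \<epsilon> \<delta> :: real and \<rho> :: "real \<times> real \<Rightarrow> real"
  assumes eps: "\<epsilon> > 0" and del: "\<delta> > 0"
    and harm: "harmonic_on \<rho> (Omega_R \<delta> - closure (ball (cR0 \<epsilon>) 1))"
    and cont: "continuous_on ((Omega_R \<delta> - closure (ball (cR0 \<epsilon>) 1))
                  \<union> ({0} \<times> {-1 - \<delta>/2 <..< 1 + \<delta>/2})
                  \<union> ({0<..} \<times> {-1 - \<delta>/2, 1 + \<delta>/2})
                  \<union> frontier (ball (cR0 \<epsilon>) 1)) \<rho>"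
    and neumann: "\<forall>x>0. ((\<lambda>t. \<rho> (x, t)) has_real_derivative 0) (at_left (1 + \<delta>/2))
                      \<and> ((\<lambda>t. \<rho> (x, t)) has_real_derivative 0) (at_right (-1 - \<delta>/2))"
    and dirichlet: "\<forall>y\<in>{-1 - \<delta>/2 <..< 1 + \<delta>/2}. \<rho> (0, y) = 0"
    and pos_circle: "\<forall>p\<in>frontier (ball (cR0 \<epsilon>) 1). \<rho> p > 0"
    and energy: "grad_sq \<rho> integrable_on (Omega_R \<delta> - closure (ball (cR0 \<epsilon>) 1))"
  shows "\<forall>p\<in>Omega_R \<delta> - closure (ball (cR0 \<epsilon>) 1). \<rho> p > 0"
proof -
  interpret half_strip_problem \<epsilon> \<delta> \<rho>
    using assms by unfold_locales auto
  show ?thesis using pos_in_D by (simp add: D_def)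
qed

end
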